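(* Let $\pi,\tau\in\mathfrak{S}_m$ be in standard form. If $\pi_m-\pi_1>\tau_m-\tau_1$, then there is an integer $K$ such that $r^\pi_{1+k(m-1),k}<r^\tau_{1+k(m-1),k}$ for all $k\ge K$. In particular, $\pi$ and $\tau$ are not strongly c-Wilf equivalent.
   Context: The standardization $\operatorname{st}(w)$ of a word of distinct integers replaces its smallest entry by 1, the next smallest by 2, etc. For $\pi\in\mathfrak{S}_m$ and $\sigma\in\mathfrak{S}_n$, $\operatorname{Em}(\pi,\sigma)=\{i\in[n-m+1]:\operatorname{st}(\sigma_i\cdots\sigma_{i+m-1})=\pi\}$. The overlap set is $\mathcal{O}_\pi=\{i\in[m-1]:\operatorname{st}(\pi_{i+1}\cdots\pi_m)=\operatorname{st}(\pi_1\cdots\pi_{m-i})\}$. A $\pi$-cluster is a pair $(\sigma,S)$ with $\sigma\in\mathfrak{S}_n$ and $S=\{i_1<\dots<i_k\}\subseteq\operatorname{Em}(\pi,\sigma)$ such that $i_1=1$, $i_k=n-m+1$, and $i_{j+1}-i_j\in\mathcal{O}_\pi$ for all $j\in[k-1]$. The cluster number $r^\pi_{n,k}$ is the number of $\pi$-clusters $(\sigma,S)$ with $\sigma\in\mathfrak{S}_n$ and $|S|=k$. Letting $a^\pi_{n,k}$ be the number of $\sigma\in\mathfrak{S}_n$ with $|\operatorname{Em}(\pi,\sigma)|=k$, $\pi$ and $\tau$ are strongly c-Wilf equivalent if $a^\pi_{n,k}=a^\tau_{n,k}$ for all $n,k$. $\pi\in\mathfrak{S}_m$ is in standard form if $\pi_1<\pi_m$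 and $\pi_1+\pi_m\le m+1$. *)

theory Defs
  imports Main
begin

text \<open>Permutations of [n] are represented as lists of naturals (one-line notation,
  1-based values); positions are 1-based in the paper, list indices 0-based here.\<close>

definition is_perm :: "nat \<Rightarrow> nat list \<Rightarrow> bool" where
  "is_perm n xs \<longleftrightarrow> length xs = n \<and> distinct xs \<and> set xs = {1..n}"

definition st :: "nat list \<Rightarrow> nat list" where
  "st w = map (\<lambda>x. card {y \<in> set w. y \<le> x}) w"

definition Em :: "nat list \<Rightarrow> nat list \<Rightarrow> nat set" where
  "Em p s = {i \<in> {1..length s - length p + 1}.
              st (take (length p) (drop (i - 1) s)) = p}"

definition overlaps :: "nat list \<Rightarrow> nat set" where
  "overlaps p = {i \<in> {1..length p - 1}. st (drop i p) = st (take (length p - i) p)}"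

definition is_cluster :: "nat list \<Rightarrow> nat list \<Rightarrow> nat set \<Rightarrow> bool" where
  "is_cluster p s S \<longleftrightarrow>
     S \<subseteq> Em p s \<and> S \<noteq> {} \<and>
     (let L = sorted_list_of_set S in
        hd L = 1 \<and> last L = length s - length p + 1 \<and>
        (\<forall>j. j + 1 < length L \<longrightarrow> L ! (j + 1) - L ! j \<in> overlaps p))"

definition cluster_num :: "nat list \<Rightarrow> nat \<Rightarrow> nat \<Rightarrow> nat" where
  "cluster_num p n k = card {(s, S). is_perm n s \<and> is_cluster p s S \<and> card S = k}"

definition occ_num :: "nat list \<Rightarrow> nat \<Rightarrow> nat \<Rightarrow> nat" where
  "occ_num p n k = card {s. is_perm n s \<and> card (Em p s) = k}"

definition strongly_cwilf_equiv :: "nat list \<Rightarrow> nat list \<Rightarrow> bool" where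
  "strongly_cwilf_equiv p t \<longleftrightarrow> (\<forall>n k. occ_num p n k = occ_num t n k)"

definition standard_form :: "nat list \<Rightarrow> bool" where
  "standard_form p \<longleftrightarrow> p ! 0 < p ! (length p - 1) \<and>
                         p ! 0 + p ! (length p - 1) \<le> length p + 1"

end

theory Submission
  imports Defs "HOL-Combinatorics.Permutations" Complex_Main
begin

text \<open>
  Let \<open>M = m - 1\<close> and \<open>E(\<pi>) = (\<pi>\<^sub>1 - 1) + (m - \<pi>\<^sub>m)\<close>, the number of values of \<open>\<pi>\<close>
  outside \<open>[\<pi>\<^sub>1, \<pi>\<^sub>m]\<close>; the hypothesis says \<open>E(\<pi>) < E(\<tau>)\<close>.
  A cluster with \<open>k\<close> occurrences in a permutation of length \<open>1 + k M\<close> must consist of the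
  occurrences at positions \<open>1, 1 + M, 1 + 2M, \<dots>\<close>, consecutive ones sharing one entry, so
  \<open>r\<^sup>\<pi>\<^bsub>1+kM,k\<^esub>\<close> counts these chain permutations. Along a chain the shared entries
  increase, and every entry whose pattern value lies in \<open>[\<pi>\<^sub>1, \<pi>\<^sub>m)\<close> is caught between
  the shared entries of its window, so its position in the order is forced: a chain
  permutation is determined by its other \<open>k E(\<pi>)\<close> entries, and
  \<open>r\<^sup>\<pi>\<^bsub>1+kM,k\<^esub> \<le> (1 + k M)\<^bsup>k E(\<pi>)\<^esup>\<close>. Conversely, the \<open>k\<close> entries of a chain
  carrying a fixed value of \<open>\<tau>\<close> outside \<open>[\<tau>\<^sub>1, \<tau>\<^sub>m]\<close> can be given \<open>k\<close> consecutive
  values in any order, so \<open>r\<^sup>\<tau>\<^bsub>1+kM,k\<^esub> \<ge> (k!)\<^bsup>E(\<tau>)\<^esup>\<close>, which eventually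
  exceeds \<open>(1 + k M)\<^bsup>k E(\<pi>)\<^esup>\<close>.

  Strongly c-Wilf equivalent patterns have the same cluster numbers: the number
  \<open>b\<^sub>n\<^sub>,\<^sub>j = \<Sum>\<^sub>i a\<^sub>n\<^sub>,\<^sub>i (i choose j)\<close> of permutations of length \<open>n\<close> with
  \<open>j\<close> marked occurrences satisfies, by splitting off the cluster containing the first marked occurrence,
  \<open>b\<^sub>n\<^sub>,\<^sub>j = n b\<^bsub>n-1,j\<^esub> + \<Sum>\<^bsub>L,r\<^esub> (n choose L) r\<^bsub>L,r\<^esub> b\<^bsub>n-L,j-r\<^esub>\<close>,
  and \<open>r\<^sub>n\<^sub>,\<^sub>j\<close> is its only term involving clusters of length \<open>n\<close>.
\<close>

lemma strict_mono_on_nth_sorted_list_of_set: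
  "strict_mono_on {..<card V} ((!) (sorted_list_of_set V))"
  by (rule strict_mono_onI) (simp add: sorted_wrt_nth_less)

lemma in_sorted_list_of_set_conv_nth:
  assumes "finite V"
  shows "x \<in> V \<longleftrightarrow> (\<exists>i<card V. sorted_list_of_set V ! i = x)"
  using assms in_set_conv_nth[of x "sorted_list_of_set V"] by simp

lemma nth_sorted_list_of_set_mem: "finite S \<Longrightarrow> k < card S \<Longrightarrow> sorted_list_of_set S ! k \<in> S"
  using in_sorted_list_of_set_conv_nth by blast

lemma nth_sorted_list_of_set_Suc_le:
  assumes "finite S" "x \<in> S" "j + 1 < card S" "sorted_list_of_set S ! j < x"
  shows "sorted_list_of_set S ! (j + 1) \<le> x"
proof -
  note mono = strict_mono_on_nth_sorted_list_of_set[of S]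
  obtain k where k: "k < card S" "sorted_list_of_set S ! k = x"
    using in_sorted_list_of_set_conv_nth[OF assms(1)] assms(2) by blast
  then have "j < k" using strict_mono_on_less[OF mono, of j k] assms(3,4) by simp
  then show ?thesis using strict_mono_on_less_eq[OF mono, of "j + 1" k] k assms(3) by simp
qed

lemma card_le_nth_sorted_list_of_set:
  assumes "finite V" "i < card V"
  shows "card {y \<in> V. y \<le> sorted_list_of_set V ! i} = Suc i"
proof -
  let ?xs = "sorted_list_of_set V"
  note mono = strict_mono_on_nth_sorted_list_of_set[of V]
  have "{y \<in> V. y \<le> ?xs ! i} = (nth ?xs) ` {..i}"
  proof
    show "{y \<in> V. y \<le> ?xs ! i} \<subseteq> (nth ?xs) ` {..i}"
    proof
      fix y assume y: "y \<in> {y \<in> V. y \<le> ?xs ! i}"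
      then obtain j where j: "j < card V" "y = ?xs ! j"
        using in_sorted_list_of_set_conv_nth[OF assms(1)] by auto
      then show "y \<in> (nth ?xs) ` {..i}"
        using strict_mono_on_less_eq[OF mono, of j i] assms(2) y by auto
    qed
    show "(nth ?xs) ` {..i} \<subseteq> {y \<in> V. y \<le> ?xs ! i}"
    proof
      fix y assume "y \<in> (nth ?xs) ` {..i}"
      then obtain j where j: "j \<le> i" "y = ?xs ! j" by auto
      then have "y \<in> set ?xs" using assms(2) by simp
      then show "y \<in> {y \<in> V. y \<le> ?xs ! i}"
        using strict_mono_on_less_eq[OF mono, of j i] j assms by simp
    qed
  qed
  moreover have "inj_on (nth ?xs) {..i}"
    using strict_mono_on_imp_inj_on[OF mono] by (rule inj_on_subset) (use assms(2) in auto)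
  ultimately show ?thesis by (simp add: card_image)
qed

definition st_rank :: "nat list \<Rightarrow> nat \<Rightarrow> nat" where
  "st_rank w x = card {y \<in> set w. y \<le> x}"

lemma st_eq_map_st_rank: "st w = map (st_rank w) w"
  by (simp add: st_def st_rank_def)

lemma length_st [simp]: "length (st w) = length w"
  by (simp add: st_def)

lemma strict_mono_on_st_rank: "strict_mono_on (set w) (st_rank w)"
proof (rule strict_mono_onI)
  fix x y assume xy: "x \<in> set w" "y \<in> set w" "x < y"
  have "{z \<in> set w. z \<le> x} \<subseteq> {z \<in> set w. z \<le> y}" using xy by auto
  moreover have "y \<in> {z \<in> set w. z \<le> y}" "y \<notin> {z \<in> set w. z \<le> x}" using xy by auto
  ultimately have "{z \<in> set w. z \<le> x} \<subset> {z \<in> set w. z \<le> y}" by blast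
  then show "st_rank w x < st_rank w y"
    unfolding st_rank_def by (rule psubset_card_mono[rotated]) simp
qed

lemma st_map_strict_mono_on:
  assumes "strict_mono_on (set w) f"
  shows "st (map f w) = st w"
proof -
  have "card {z \<in> f ` set w. z \<le> f x} = card {y \<in> set w. y \<le> x}" if "x \<in> set w" for x
  proof -
    have "{z \<in> f ` set w. z \<le> f x} = f ` {y \<in> set w. y \<le> x}"
      using strict_mono_on_less_eq[OF assms _ that] by auto
    moreover have "inj_on f {y \<in> set w. y \<le> x}"
      using strict_mono_on_imp_inj_on[OF assms] by (rule inj_on_subset) auto
    ultimately show ?thesis by (simp add: card_image)
  qed
  then show ?thesis by (simp add: st_def)
qed

lemma st_take_drop_st: "st (take a (drop b (st w))) = st (take a (drop b w))"
proof -
  have "take a (drop b (st w)) = map (st_rank w) (take a (drop b w))"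
    by (simp add: st_eq_map_st_rank take_map drop_map)
  moreover have "strict_mono_on (set (take a (drop b w))) (st_rank w)"
    using strict_mono_on_st_rank by (rule monotone_on_subset) (meson in_set_dropD in_set_takeD subsetI)
  ultimately show ?thesis by (simp add: st_map_strict_mono_on)
qed

lemma st_take_st: "st (take a (st w)) = st (take a w)"
  using st_take_drop_st[of a 0 w] by simp

lemma st_drop_st: "st (drop b (st w)) = st (drop b w)"
  using st_take_drop_st[of "length w" b w] by simp

lemma st_nth_less_iff:
  assumes "i < length w" "j < length w"
  shows "st w ! i < st w ! j \<longleftrightarrow> w ! i < w ! j"
  using assms strict_mono_on_less[OF strict_mono_on_st_rank] by (simp add: st_eq_map_st_rank)

lemma st_perm:
  assumes "is_perm n u"
  shows "st u = u"
proof -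
  have "st_rank u x = x" if "x \<in> set u" for x
  proof -
    have "{y \<in> set u. y \<le> x} = {1..x}" using assms that by (auto simp: is_perm_def)
    then show ?thesis by (simp add: st_rank_def)
  qed
  then show ?thesis by (simp add: st_eq_map_st_rank map_idI)
qed

lemma is_perm_if_distinct_subset:
  assumes "distinct xs" "set xs \<subseteq> {1..length xs}"
  shows "is_perm (length xs) xs"
proof -
  have "card (set xs) = card {1..length xs}" using distinct_card[OF assms(1)] by simp
  then have "set xs = {1..length xs}" using card_subset_eq[OF _ assms(2)] by simp
  then show ?thesis using assms(1) by (simp add: is_perm_def)
qed

lemma is_perm_st:
  assumes "distinct w"
  shows "is_perm (length w) (st w)"
proof -
  have "distinct (st w)"
    using assms strict_mono_on_imp_inj_on[OF strict_mono_on_st_rank] by (simp add: st_eq_map_st_rank distinct_map)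
  moreover have "set (st w) \<subseteq> {1..length (st w)}"
  proof
    fix z assume "z \<in> set (st w)"
    then obtain x where x: "x \<in> set w" "z = st_rank w x" by (auto simp: st_eq_map_st_rank)
    have "0 < card {y \<in> set w. y \<le> x}" using x by (auto simp: card_gt_0_iff)
    moreover have "card {y \<in> set w. y \<le> x} \<le> card (set w)" by (rule card_mono) auto
    ultimately show "z \<in> {1..length (st w)}" using x distinct_card[OF assms] by (simp add: st_rank_def)
  qed
  ultimately show ?thesis using is_perm_if_distinct_subset[of "st w"] by simp
qed

lemma card_set_filter_conv_nth:
  assumes "distinct w"
  shows "card {y \<in> set w. P y} = card {j. j < length w \<and> P (w ! j)}"
proof -
  have "{y \<in> set w. P y} = (nth w) ` {j. j < length w \<and> P (w ! j)}"
    by (auto simp: in_set_conv_nth)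
  moreover have "inj_on (nth w) {j. j < length w \<and> P (w ! j)}"
    using assms by (auto simp: inj_on_def nth_eq_iff_index_eq)
  ultimately show ?thesis by (simp add: card_image)
qed

lemma st_eq_if_order_embedding:
  assumes len: "length w = length t" and t: "is_perm (length t) t"
    and ord: "\<And>i j. i < length t \<Longrightarrow> j < length t \<Longrightarrow> t ! i < t ! j \<Longrightarrow> w ! i < w ! j"
  shows "st w = t"
proof -
  have dt: "distinct t" using t by (simp add: is_perm_def)
  have le_iff: "w ! j \<le> w ! i \<longleftrightarrow> t ! j \<le> t ! i" if "i < length t" "j < length t" for i j
  proof (cases "i = j")
    case False
    then have "t ! i \<noteq> t ! j" using dt that by (simp add: nth_eq_iff_index_eq)
    then show ?thesis using ord[OF that] ord[OF that(2,1)] by (meson less_asym linorder_neqE_nat not_le)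
  qed simp
  have "distinct w"
  proof -
    have "w ! i \<noteq> w ! j" if "i < length t" "j < length t" "i \<noteq> j" for i j
      using ord[OF that(1,2)] ord[OF that(2,1)] dt that
      by (metis less_irrefl linorder_neqE_nat nth_eq_iff_index_eq)
    then show ?thesis using len by (simp add: distinct_conv_nth)
  qed
  show ?thesis
  proof (rule nth_equalityI)
    fix i assume "i < length (st w)"
    then have i: "i < length t" using len by simp
    have "st w ! i = card {j. j < length t \<and> w ! j \<le> w ! i}"
      using i len card_set_filter_conv_nth[OF \<open>distinct w\<close>]
      by (simp add: st_eq_map_st_rank st_rank_def)
    also have "\<dots> = card {j. j < length t \<and> t ! j \<le> t ! i}"
      using le_iff[OF i] by (metis (lifting))
    also have "\<dots> = st t ! i"
      using i card_set_filter_conv_nth[OF dt] by (simp add: st_eq_map_st_rank st_rank_def)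
    finally show "st w ! i = t ! i" using st_perm[OF t] by simp
  qed (use len in simp)
qed

lemma Em_iff:
  assumes "length p \<ge> 1"
  shows "i \<in> Em p s \<longleftrightarrow> 1 \<le> i \<and> i + length p - 1 \<le> length s \<and>
            st (take (length p) (drop (i - 1) s)) = p"
proof
  assume "i \<in> Em p s"
  then have st: "st (take (length p) (drop (i - 1) s)) = p" and i: "1 \<le> i"
    by (auto simp: Em_def)
  then have "length (take (length p) (drop (i - 1) s)) = length p"
    by (metis length_st)
  then have "i - 1 + length p \<le> length s" using assms by (auto simp: min_def split: if_splits)
  then show "1 \<le> i \<and> i + length p - 1 \<le> length s \<and> st (take (length p) (drop (i - 1) s)) = p"
    using i st by auto
next
  assume "1 \<le> i \<and> i + length p - 1 \<le> length s \<and> st (take (length p) (drop (i - 1) s)) = p"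
  then show "i \<in> Em p s" using assms by (auto simp: Em_def)
qed

lemma Em_bounds:
  assumes "length p \<ge> 1" "i \<in> Em p s"
  shows "1 \<le> i" "i + length p - 1 \<le> length s"
  using Em_iff[OF assms(1)] assms(2) by auto

lemma Em_Nil: "length p \<ge> 1 \<Longrightarrow> Em p [] = {}"
  using Em_bounds by fastforce

lemma finite_Em [simp]: "finite (Em p s)"
  unfolding Em_def by simp

lemma Em_st_take:
  assumes "length p \<ge> 1" "L \<le> length s" "1 \<le> i" "i + length p - 1 \<le> L"
  shows "i \<in> Em p (st (take L s)) \<longleftrightarrow> i \<in> Em p s"
proof -
  have "length p \<le> L - (i - 1)" using assms by linarith
  then have "take (length p) (drop (i - 1) (take L s)) = take (length p) (drop (i - 1) s)"
    by (simp add: drop_take min_def)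
  then show ?thesis using assms by (simp add: Em_iff st_take_drop_st)
qed

lemma Em_st_drop:
  assumes "length p \<ge> 1" "L \<le> length s"
  shows "i \<in> Em p (st (drop L s)) \<longleftrightarrow> 1 \<le> i \<and> L + i \<in> Em p s"
proof -
  have "drop (i - 1) (drop L s) = drop (L + i - 1) s" if "1 \<le> i" using that by (simp add: add.commute)
  then show ?thesis using assms by (auto simp: Em_iff st_take_drop_st)
qed

lemma overlaps_if_Em:
  assumes m: "length p \<ge> 1" and i: "i \<in> Em p s" and ig: "i + g \<in> Em p s"
    and g: "1 \<le> g" "g \<le> length p - 1"
  shows "g \<in> overlaps p"
proof -
  let ?m = "length p"
  define w1 where "w1 = take ?m (drop (i - 1) s)"
  define w2 where "w2 = take ?m (drop (i + g - 1) s)"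
  have "st w1 = p" using i m by (simp add: Em_iff w1_def)
  have "st w2 = p" using ig m by (simp add: Em_iff w2_def)
  have "drop g (drop (i - 1) s) = drop (i + g - 1) s"
    using Em_bounds(1)[OF m i] by (simp add: add.commute)
  then have "drop g w1 = take (?m - g) w2"
    by (simp add: w1_def w2_def drop_take)
  then have "st (drop g p) = st (take (?m - g) p)"
    using st_drop_st[of g w1] st_take_st[of "?m - g" w2] \<open>st w1 = p\<close> \<open>st w2 = p\<close> by simp
  then show ?thesis using g by (simp add: overlaps_def)
qed

section \<open>Splitting permutations\<close>

definition perms :: "nat \<Rightarrow> nat list set" where
  "perms n = {s. is_perm n s}"

lemma finite_perms [simp]: "finite (perms n)"
proof -
  have "perms n \<subseteq> {xs. set xs \<subseteq> {1..n} \<and> length xs = n}"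
    by (auto simp: perms_def is_perm_def)
  moreover have "finite {xs. set xs \<subseteq> {1..n} \<and> length xs = n}"
    by (rule finite_lists_length_eq) simp
  ultimately show ?thesis by (rule finite_subset)
qed

lemma perms_0: "perms 0 = {[]}"
  by (auto simp: perms_def is_perm_def)

lemma perms_1: "perms 1 = {[1]}"
proof -
  have "is_perm 1 u \<longleftrightarrow> u = [1]" for u
  proof
    assume "is_perm 1 u"
    then have "length u = 1" "set u = {1}" by (auto simp: is_perm_def)
    then show "u = [1]" by (metis One_nat_def length_0_conv length_Suc_conv list.set(1) list.simps(15) singleton_insert_inj_eq)
  qed (simp add: is_perm_def)
  then show ?thesis by (auto simp: perms_def)
qed

definition relabel :: "nat set \<Rightarrow> nat list \<Rightarrow> nat list" where
  "relabel V u = map (\<lambda>x. sorted_list_of_set V ! (x - 1)) u"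

lemma relabel_perm:
  assumes "finite V" "is_perm (card V) u"
  shows "distinct (relabel V u)" "set (relabel V u) = V" "st (relabel V u) = u"
    "length (relabel V u) = card V"
proof -
  let ?xs = "sorted_list_of_set V"
  let ?phi = "\<lambda>x. ?xs ! (x - 1)"
  have su: "set u = {1..card V}" using assms by (simp add: is_perm_def)
  have mono: "strict_mono_on (set u) ?phi"
  proof (rule strict_mono_onI)
    fix x y assume "x \<in> set u" "y \<in> set u" "x < y"
    then have "x - 1 \<in> {..<card V}" "y - 1 \<in> {..<card V}" "x - 1 < y - 1" using su by auto
    then show "?phi x < ?phi y" by (rule strict_mono_onD[OF strict_mono_on_nth_sorted_list_of_set])
  qed
  show "distinct (relabel V u)"
    using assms strict_mono_on_imp_inj_on[OF mono] by (simp add: relabel_def distinct_map is_perm_def)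
  show "st (relabel V u) = u"
    unfolding relabel_def using st_map_strict_mono_on[OF mono] st_perm[OF assms(2)] by simp
  have "?phi ` {1..card V} = set ?xs"
  proof
    show "set ?xs \<subseteq> ?phi ` {1..card V}"
    proof
      fix y assume "y \<in> set ?xs"
      then obtain j where "j < card V" "y = ?xs ! j" by (auto simp: in_set_conv_nth)
      then show "y \<in> ?phi ` {1..card V}" by (intro image_eqI[of _ _ "Suc j"]) auto
    qed
  qed (auto intro!: nth_mem)
  then show "set (relabel V u) = V" using su assms by (simp add: relabel_def)
  show "length (relabel V u) = card V" using assms by (simp add: relabel_def is_perm_def)
qed

lemma relabel_set_st:
  assumes "distinct x"
  shows "relabel (set x) (st x) = x"
proof -
  let ?xs = "sorted_list_of_set (set x)"
  have "?xs ! (st_rank x v - 1) = v" if v: "v \<in> set x" for v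
  proof -
    obtain i where i: "i < card (set x)" "v = ?xs ! i"
      using v in_sorted_list_of_set_conv_nth[of "set x"] by auto
    then have "st_rank x v = Suc i"
      using card_le_nth_sorted_list_of_set[OF _ i(1)] by (simp add: st_rank_def)
    then show ?thesis using i by simp
  qed
  then show ?thesis by (simp add: relabel_def st_eq_map_st_rank map_idI)
qed

lemma perm_eq_if_split_eq:
  assumes s: "is_perm n s" and s': "is_perm n s'" and "set (take L s) = set (take L s')"
    and "st (take L s) = st (take L s')" and "st (drop L s) = st (drop L s')"
  shows "s = s'"
proof -
  have ds: "distinct s" "distinct s'" and ss: "set s = set s'" using s s' by (auto simp: is_perm_def)
  have set_drop: "set (drop L x) = set x - set (take L x)" if "distinct x" for x :: "nat list"
  proof -
    have "set x = set (take L x) \<union> set (drop L x)" by (metis append_take_drop_id set_append)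
    moreover have "set (take L x) \<inter> set (drop L x) = {}"
      using that by (metis append_take_drop_id distinct_append)
    ultimately show ?thesis by blast
  qed
  have "set (drop L s) = set (drop L s')" using set_drop ds ss assms(3) by simp
  then have "relabel (set (take L s)) (st (take L s)) = relabel (set (take L s')) (st (take L s'))"
    "relabel (set (drop L s)) (st (drop L s)) = relabel (set (drop L s')) (st (drop L s'))"
    using assms(3-5) by simp_all
  then have "take L s = take L s'" "drop L s = drop L s'"
    using ds by (simp_all add: relabel_set_st)
  then show "s = s'" by (metis append_take_drop_id)
qed

lemma perm_with_split:
  assumes "L \<le> n" and V: "V \<subseteq> {1..n}" "card V = L" and u: "is_perm L u" and w: "is_perm (n - L) w"
  obtains s where "is_perm n s" "set (take L s) = V" "st (take L s) = u" "st (drop L s) = w"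
proof -
  have fV: "finite V" using V finite_subset by blast
  have cW: "card ({1..n} - V) = n - L" using V by (simp add: card_Diff_subset fV)
  note R1 = relabel_perm[OF fV, unfolded V(2), OF u]
  note R2 = relabel_perm[of "{1..n} - V", unfolded cW, OF _ w]
  define s where "s = relabel V u @ relabel ({1..n} - V) w"
  have "length s = n" using R1 R2 V assms by (simp add: s_def)
  moreover have "distinct s" using R1(1,2) R2(1,2) by (auto simp: s_def)
  moreover have "set s = {1..n}" using R1(2) R2(2) V by (auto simp: s_def)
  ultimately have "is_perm n s" by (simp add: is_perm_def)
  moreover have "set (take L s) = V" "st (take L s) = u" "st (drop L s) = w"
    using R1 R2 by (simp_all add: s_def)
  ultimately show ?thesis by (rule that)
qed

lemma bij_betw_split_perm:
  assumes "L \<le> n"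
  shows "bij_betw (\<lambda>s. (set (take L s), st (take L s), st (drop L s))) (perms n)
           ({V. V \<subseteq> {1..n} \<and> card V = L} \<times> perms L \<times> perms (n - L))"
proof (rule bij_betwI')
  fix s s' assume "s \<in> perms n" "s' \<in> perms n"
  then show "(set (take L s), st (take L s), st (drop L s)) = (set (take L s'), st (take L s'), st (drop L s'))
        \<longleftrightarrow> s = s'"
    using perm_eq_if_split_eq[of n s s' L] by (auto simp: perms_def)
next
  fix s assume "s \<in> perms n"
  then have ps: "is_perm n s" by (simp add: perms_def)
  then have d: "distinct (take L s)" "distinct (drop L s)" by (auto simp: is_perm_def)
  have "set (take L s) \<subseteq> {1..n}" using ps by (metis is_perm_def set_take_subset)
  moreover have "card (set (take L s)) = L" using d ps assms by (simp add: distinct_card is_perm_def)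
  moreover have "is_perm L (st (take L s))" using is_perm_st[OF d(1)] ps assms by (simp add: is_perm_def)
  moreover have "is_perm (n - L) (st (drop L s))" using is_perm_st[OF d(2)] ps by (simp add: is_perm_def)
  ultimately show "(set (take L s), st (take L s), st (drop L s)) \<in>
      {V. V \<subseteq> {1..n} \<and> card V = L} \<times> perms L \<times> perms (n - L)"
    by (simp add: perms_def)
next
  fix x assume "x \<in> {V. V \<subseteq> {1..n} \<and> card V = L} \<times> perms L \<times> perms (n - L)"
  then obtain V u w where x: "x = (V, u, w)" and V: "V \<subseteq> {1..n}" "card V = L"
    and u: "is_perm L u" and w: "is_perm (n - L) w"
    by (auto simp: perms_def)
  obtain s where "is_perm n s" "set (take L s) = V" "st (take L s) = u" "st (drop L s) = w"
    using perm_with_split[OF assms V u w] .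
  then show "\<exists>s\<in>perms n. x = (set (take L s), st (take L s), st (drop L s))"
    using x by (auto simp: perms_def)
qed

lemma sum_perms_split:
  fixes f g :: "nat list \<Rightarrow> nat"
  assumes "L \<le> n"
  shows "(\<Sum>s\<in>perms n. f (st (take L s)) * g (st (drop L s)))
          = (n choose L) * ((\<Sum>u\<in>perms L. f u) * (\<Sum>w\<in>perms (n - L). g w))"
proof -
  let ?Vs = "{V. V \<subseteq> {1..n} \<and> card V = L}"
  let ?h = "\<lambda>s. (set (take L s), st (take L s), st (drop L s))"
  have "(\<Sum>s\<in>perms n. f (st (take L s)) * g (st (drop L s)))
        = (\<Sum>s\<in>perms n. (\<lambda>(V, u, w). f u * g w) (?h s))"
    by simp
  also have "\<dots> = (\<Sum>x\<in>?Vs \<times> (perms L \<times> perms (n - L)). (\<lambda>(V, u, w). f u * g w) x)"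
    by (rule sum.reindex_bij_betw[OF bij_betw_split_perm[OF assms]])
  also have "\<dots> = (\<Sum>V\<in>?Vs. \<Sum>y\<in>perms L \<times> perms (n - L). (\<lambda>(u, w). f u * g w) y)"
    by (rule sum.cartesian_product[symmetric])
  also have "\<dots> = card ?Vs * ((\<Sum>u\<in>perms L. f u) * (\<Sum>w\<in>perms (n - L). g w))"
    by (simp add: sum_product sum.cartesian_product)
  also have "card ?Vs = n choose L"
    using n_subsets[of "{1..n}" L] by simp
  finally show ?thesis .
qed

section \<open>Clusters\<close>

definition splits_at :: "nat list \<Rightarrow> nat set \<Rightarrow> nat \<Rightarrow> bool" where
  "splits_at p S c \<longleftrightarrow> (\<forall>i\<in>S. i \<le> c \<longrightarrow> i + length p - 1 \<le> c)"

lemma splits_at_length: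
  assumes "length p \<ge> 1" "S \<subseteq> Em p s"
  shows "splits_at p S (length s)"
  using assms Em_bounds(2) by (fastforce simp: splits_at_def)

lemma is_cluster_nth_sorted_list_of_set:
  assumes "is_cluster p u S"
  shows "finite S" "0 < card S" "sorted_list_of_set S ! 0 = 1"
    "sorted_list_of_set S ! (card S - 1) = length u - length p + 1"
    "\<And>j. j + 1 < card S \<Longrightarrow> sorted_list_of_set S ! (j + 1) - sorted_list_of_set S ! j \<in> overlaps p"
proof -
  let ?xs = "sorted_list_of_set S"
  show fS: "finite S" using assms finite_subset[OF _ finite_Em] by (auto simp: is_cluster_def)
  show cpos: "0 < card S" using assms fS by (auto simp: is_cluster_def card_gt_0_iff)
  then have "?xs \<noteq> []" by (metis length_0_conv less_numeral_extra(3) sorted_list_of_set.length_sorted_key_list_of_set)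
  then show "?xs ! 0 = 1" "?xs ! (card S - 1) = length u - length p + 1"
    using assms by (auto simp: is_cluster_def Let_def hd_conv_nth last_conv_nth)
  show "\<And>j. j + 1 < card S \<Longrightarrow> ?xs ! (j + 1) - ?xs ! j \<in> overlaps p"
    using assms by (auto simp: is_cluster_def Let_def)
qed

lemma cluster_one_mem: "is_cluster p u S \<Longrightarrow> 1 \<in> S"
  using is_cluster_nth_sorted_list_of_set[of p u S] in_sorted_list_of_set_conv_nth[of S 1] by auto

lemma cluster_not_splits_at:
  assumes m: "length p \<ge> 2" and cl: "is_cluster p u S" and c: "1 \<le> c" "c < length u"
  shows "\<not> splits_at p S c"
proof
  assume split: "splits_at p S c"
  let ?m = "length p" and ?xs = "sorted_list_of_set S"
  note xs = is_cluster_nth_sorted_list_of_set[OF cl]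
  have SE: "S \<subseteq> Em p u" using cl by (simp add: is_cluster_def)
  note mem = nth_sorted_list_of_set_mem[OF xs(1)]
  define J where "J = {j. j < card S \<and> ?xs ! j \<le> c}"
  have "0 \<in> J" "finite J" using xs(2,3) c by (simp_all add: J_def)
  define j where "j = Max J"
  have "j \<in> J" using Max_in[OF \<open>finite J\<close>] \<open>0 \<in> J\<close> by (auto simp: j_def)
  then have j: "j < card S" "?xs ! j \<le> c" by (simp_all add: J_def)
  have reach: "?xs ! j + ?m - 1 \<le> c" using split j mem by (simp add: splits_at_def)
  show False
  proof (cases "j + 1 < card S")
    case True
    have "j + 1 \<notin> J" using Max_ge[OF \<open>finite J\<close>] j_def by fastforce
    then have "c < ?xs ! (j + 1)" using True by (auto simp: J_def)
    moreover have "?xs ! (j + 1) - ?xs ! j \<le> ?m - 1" using xs(5)[OF True] by (simp add: overlaps_def)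
    ultimately show False using reach m by linarith
  next
    case False
    then have "j = card S - 1" using j by linarith
    then have "?xs ! j = length u - ?m + 1" using xs(4) by simp
    moreover have "?xs ! j + ?m - 1 \<le> length u" using Em_bounds(2)[of p] m mem[OF j(1)] SE by auto
    ultimately show False using reach c m by linarith
  qed
qed

lemma sorted_gap_mem_overlaps_if_not_splits_at:
  assumes m: "length p \<ge> 2" and SE: "S \<subseteq> Em p u"
    and nosplit: "\<And>c. 1 \<le> c \<Longrightarrow> c < length u \<Longrightarrow> \<not> splits_at p S c" and j: "j + 1 < card S"
  shows "sorted_list_of_set S ! (j + 1) - sorted_list_of_set S ! j \<in> overlaps p"
proof -
  let ?m = "length p" and ?L = "length u" and ?xs = "sorted_list_of_set S"
  let ?i = "?xs ! j" and ?i' = "?xs ! (j + 1)"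
  note mono = strict_mono_on_nth_sorted_list_of_set[of S]
  have fS: "finite S" by (rule finite_subset[OF SE finite_Em])
  have Sb: "1 \<le> i \<and> i + ?m - 1 \<le> ?L" if "i \<in> S" for i
    using Em_bounds[of p i u] m SE that by auto
  have lt: "?i < ?i'" using strict_mono_on_less[OF mono, of j "j + 1"] j by simp
  have iS: "?i \<in> S" "?i' \<in> S" using nth_sorted_list_of_set_mem[OF fS] j by simp_all
  have "?i' - ?i \<le> ?m - 1"
  proof (rule ccontr)
    assume "\<not> ?i' - ?i \<le> ?m - 1"
    then have big: "?i + ?m - 1 < ?i'" by linarith
    have "splits_at p S (?i + ?m - 1)"
      unfolding splits_at_def
    proof (intro ballI impI)
      fix x assume "x \<in> S" "x \<le> ?i + ?m - 1"
      then have "x \<le> ?i" using nth_sorted_list_of_set_Suc_le[OF fS _ j, of x] big by fastforce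
      then show "x + ?m - 1 \<le> ?i + ?m - 1" by simp
    qed
    moreover have "1 \<le> ?i + ?m - 1" "?i + ?m - 1 < ?L" using Sb[OF iS(1)] Sb[OF iS(2)] big m by linarith+
    ultimately show False using nosplit by blast
  qed
  moreover have "?i \<in> Em p u" "?i + (?i' - ?i) \<in> Em p u" using iS SE lt by auto
  ultimately show ?thesis using overlaps_if_Em[of p ?i u "?i' - ?i"] lt m by simp
qed

lemma is_cluster_if_not_splits_at:
  assumes m: "length p \<ge> 2" and SE: "S \<subseteq> Em p u" and one: "1 \<in> S"
    and nosplit: "\<And>c. 1 \<le> c \<Longrightarrow> c < length u \<Longrightarrow> \<not> splits_at p S c"
  shows "is_cluster p u S"
proof -
  let ?m = "length p" and ?L = "length u" and ?xs = "sorted_list_of_set S"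
  note mono = strict_mono_on_nth_sorted_list_of_set[of S]
  have fS: "finite S" by (rule finite_subset[OF SE finite_Em])
  have Sb: "1 \<le> i \<and> i + ?m - 1 \<le> ?L" if "i \<in> S" for i
    using Em_bounds[of p i u] m SE that by auto
  have idx: "x \<in> S \<longleftrightarrow> (\<exists>k<card S. ?xs ! k = x)" for x
    by (rule in_sorted_list_of_set_conv_nth[OF fS])
  have cpos: "0 < card S" using one fS by (auto simp: card_gt_0_iff)
  have xne: "?xs \<noteq> []" using cpos by (metis length_0_conv less_numeral_extra(3) sorted_list_of_set.length_sorted_key_list_of_set)
  have "?xs ! 0 = 1"
  proof -
    obtain k where k: "k < card S" "?xs ! k = 1" using idx one by blast
    then have "?xs ! 0 \<le> 1" using strict_mono_on_less_eq[OF mono, of 0 k] cpos by simp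
    moreover have "?xs ! 0 \<ge> 1" using Sb idx cpos by blast
    ultimately show ?thesis by simp
  qed
  define l where "l = ?xs ! (card S - 1)"
  have lS: "l \<in> S" unfolding l_def using nth_sorted_list_of_set_mem[OF fS] cpos by simp
  have lmax: "i \<le> l" if "i \<in> S" for i
    using idx[of i] that strict_mono_on_less_eq[OF mono, of _ "card S - 1"] cpos l_def by force
  have "splits_at p S (l + ?m - 1)"
    unfolding splits_at_def
  proof (intro ballI impI)
    fix i assume "i \<in> S"
    then show "i + ?m - 1 \<le> l + ?m - 1" using lmax[of i] by linarith
  qed
  moreover have "1 \<le> l + ?m - 1" using Sb[OF lS] m by linarith
  ultimately have "\<not> l + ?m - 1 < ?L" using nosplit by blast
  then have "l = ?L - ?m + 1" using Sb[OF lS] by linarith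
  moreover have "?xs ! (j + 1) - ?xs ! j \<in> overlaps p" if "j + 1 < card S" for j
    using sorted_gap_mem_overlaps_if_not_splits_at[OF m SE nosplit that] .
  ultimately show ?thesis
    using SE one xne \<open>?xs ! 0 = 1\<close> l_def
    by (auto simp: is_cluster_def Let_def hd_conv_nth last_conv_nth)
qed

section \<open>Cluster numbers are determined by occurrence numbers\<close>

definition marked_sets :: "nat list \<Rightarrow> nat list \<Rightarrow> nat \<Rightarrow> nat set set" where
  "marked_sets p s j = {S. S \<subseteq> Em p s \<and> card S = j}"

definition cluster_sets :: "nat list \<Rightarrow> nat list \<Rightarrow> nat \<Rightarrow> nat set set" where
  "cluster_sets p s r = {S. is_cluster p s S \<and> card S = r}"

definition marked_num :: "nat list \<Rightarrow> nat \<Rightarrow> nat \<Rightarrow> nat" where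
  "marked_num p n j = (\<Sum>s\<in>perms n. card (marked_sets p s j))"

definition first_split :: "nat list \<Rightarrow> nat set \<Rightarrow> nat" where
  "first_split p S = (LEAST c. 1 \<le> c \<and> splits_at p S c)"

definition first_block_sets :: "nat list \<Rightarrow> nat list \<Rightarrow> nat \<Rightarrow> nat \<Rightarrow> nat \<Rightarrow> nat set set" where
  "first_block_sets p s j L r =
     {S \<in> marked_sets p s j. 1 \<in> S \<and> first_split p S = L \<and> card {i \<in> S. i \<le> L} = r}"

lemma finite_marked_sets [simp]: "finite (marked_sets p s j)"
  unfolding marked_sets_def by (rule finite_subset[of _ "Pow (Em p s)"]) auto

lemma finite_cluster_sets [simp]: "finite (cluster_sets p s r)"
  unfolding cluster_sets_def is_cluster_def by (rule finite_subset[of _ "Pow (Em p s)"]) auto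

lemma card_marked_sets: "card (marked_sets p s j) = card (Em p s) choose j"
  unfolding marked_sets_def by (rule n_subsets) simp

lemma cluster_num_eq_sum: "cluster_num p n r = (\<Sum>s\<in>perms n. card (cluster_sets p s r))"
proof -
  have "{(s, S). is_perm n s \<and> is_cluster p s S \<and> card S = r} = Sigma (perms n) (\<lambda>s. cluster_sets p s r)"
    by (auto simp: perms_def cluster_sets_def)
  then show ?thesis by (simp add: cluster_num_def)
qed

lemma Em_st_drop_image:
  assumes "length p \<ge> 1" "L \<le> length s"
  shows "(+) L ` Em p (st (drop L s)) = {i \<in> Em p s. L < i}"
proof
  show "(+) L ` Em p (st (drop L s)) \<subseteq> {i \<in> Em p s. L < i}"
    using Em_st_drop[OF assms] by auto
  show "{i \<in> Em p s. L < i} \<subseteq> (+) L ` Em p (st (drop L s))"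
  proof
    fix i assume "i \<in> {i \<in> Em p s. L < i}"
    then have "i - L \<in> Em p (st (drop L s))" using Em_st_drop[OF assms, of "i - L"] by auto
    then show "i \<in> (+) L ` Em p (st (drop L s))"
      using \<open>i \<in> {i \<in> Em p s. L < i}\<close> by (intro image_eqI[of _ _ "i - L"]) auto
  qed
qed

lemma card_marked_sets_not_1:
  assumes "length p \<ge> 1" "length s \<ge> 1"
  shows "card {S \<in> marked_sets p s j. 1 \<notin> S} = card (marked_sets p (st (drop 1 s)) j)"
proof -
  have "{S \<in> marked_sets p s j. 1 \<notin> S} = {S. S \<subseteq> Em p s - {1} \<and> card S = j}"
    by (auto simp: marked_sets_def)
  moreover have "Em p s - {1} = (+) 1 ` Em p (st (drop 1 s))"
    using Em_st_drop_image[OF assms] Em_bounds(1)[OF assms(1)] by force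
  ultimately show ?thesis by (simp add: n_subsets card_marked_sets card_image)
qed

lemma first_split_spec:
  assumes "length p \<ge> 1" "S \<subseteq> Em p s" "length s \<ge> 1"
  shows "1 \<le> first_split p S" "splits_at p S (first_split p S)" "first_split p S \<le> length s"
    and "\<And>c. 1 \<le> c \<Longrightarrow> c < first_split p S \<Longrightarrow> \<not> splits_at p S c"
proof -
  have ex: "1 \<le> length s \<and> splits_at p S (length s)"
    using assms splits_at_length by blast
  show "1 \<le> first_split p S" "splits_at p S (first_split p S)"
    using LeastI[of "\<lambda>c. 1 \<le> c \<and> splits_at p S c", OF ex] by (simp_all add: first_split_def)
  show "first_split p S \<le> length s"
    unfolding first_split_def by (rule Least_le[of "\<lambda>c. 1 \<le> c \<and> splits_at p S c", OF ex])
  show "\<And>c. 1 \<le> c \<Longrightarrow> c < first_split p S \<Longrightarrow> \<not> splits_at p S c"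
    using not_less_Least[of _ "\<lambda>c. 1 \<le> c \<and> splits_at p S c"] unfolding first_split_def by blast
qed

lemma first_split_eqI:
  assumes "1 \<le> L" "splits_at p S L" "\<And>c. 1 \<le> c \<Longrightarrow> c < L \<Longrightarrow> \<not> splits_at p S c"
  shows "first_split p S = L"
  unfolding first_split_def
  by (rule Least_equality) (use assms not_le in blast)+

lemma card_Un_shifted:
  fixes L :: nat
  assumes "finite A" "finite B" "\<forall>i\<in>A. i \<le> L" "\<forall>i\<in>B. 0 < i"
  shows "card (A \<union> (+) L ` B) = card A + card B"
proof -
  have "A \<inter> (+) L ` B = {}"
  proof (intro equals0I)
    fix x assume "x \<in> A \<inter> (+) L ` B"
    then obtain b where "x \<in> A" "b \<in> B" "x = L + b" by auto
    then show False using assms(3,4) by fastforce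
  qed
  then show ?thesis using assms(1,2) by (simp add: card_Un_disjoint card_image)
qed

lemma Un_shifted_inverse:
  fixes L :: nat
  assumes "\<forall>i\<in>A. i \<le> L" "\<forall>i\<in>B. 0 < i"
  shows "{i \<in> A \<union> (+) L ` B. i \<le> L} = A" "{i. 0 < i \<and> L + i \<in> A \<union> (+) L ` B} = B"
  using assms by (fastforce, force)

lemma Un_shifted_split:
  fixes L :: nat
  shows "{i \<in> S. i \<le> L} \<union> (+) L ` {i. 0 < i \<and> L + i \<in> S} = S"
proof (intro set_eqI iffI)
  fix x assume "x \<in> S"
  then show "x \<in> {i \<in> S. i \<le> L} \<union> (+) L ` {i. 0 < i \<and> L + i \<in> S}"
    by (cases "x \<le> L") (auto intro: image_eqI[of _ _ "x - L"])
qed auto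

lemma glue_mem_first_block_sets:
  assumes m: "length p \<ge> 2" and L: "1 \<le> L" "L \<le> length s" and r: "r \<le> j"
    and S1: "S1 \<in> cluster_sets p (st (take L s)) r"
    and S2: "S2 \<in> marked_sets p (st (drop L s)) (j - r)"
  shows "S1 \<union> (+) L ` S2 \<in> first_block_sets p s j L r"
proof -
  let ?u = "st (take L s)" and ?S = "S1 \<union> (+) L ` S2"
  have m1: "length p \<ge> 1" using m by simp
  have cl: "is_cluster p ?u S1" "card S1 = r" using S1 by (auto simp: cluster_sets_def)
  have S1E: "S1 \<subseteq> Em p ?u" using cl by (simp add: is_cluster_def)
  have S2E: "S2 \<subseteq> Em p (st (drop L s))" "card S2 = j - r" using S2 by (auto simp: marked_sets_def)
  have S1b: "1 \<le> i \<and> i + length p - 1 \<le> L" if "i \<in> S1" for i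
    using Em_bounds[OF m1, of i ?u] S1E that L by auto
  have S1le: "i \<le> L" if "i \<in> S1" for i
    using S1b[OF that] m by linarith
  have S2b: "0 < i" if "i \<in> S2" for i
    using Em_bounds(1)[OF m1, of i] S2E that by fastforce
  have "S1 \<subseteq> Em p s" using S1E S1b Em_st_take[OF m1 L(2)] by blast
  moreover have "(+) L ` S2 \<subseteq> Em p s" using S2E Em_st_drop_image[OF m1 L(2)] by blast
  moreover have "card ?S = card S1 + card S2"
    using finite_subset[OF S1E finite_Em] finite_subset[OF S2E(1) finite_Em] S1le S2b
    by (intro card_Un_shifted) auto
  then have "card ?S = j" using cl S2E r by simp
  moreover have low: "{i \<in> ?S. i \<le> L} = S1" using S1le S2b by fastforce
  moreover have "first_split p ?S = L"
  proof (rule first_split_eqI[OF L(1)])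
    show "splits_at p ?S L" using low S1b by (auto simp: splits_at_def)
    fix c assume c: "1 \<le> c" "c < L"
    have "\<not> splits_at p S1 c" using cluster_not_splits_at[OF m cl(1)] c L by simp
    then show "\<not> splits_at p ?S c" by (auto simp: splits_at_def)
  qed
  ultimately show ?thesis
    using cluster_one_mem[OF cl(1)] cl(2) by (simp add: first_block_sets_def marked_sets_def)
qed

lemma cut_mem_first_block_sets:
  assumes m: "length p \<ge> 2" and L: "L \<le> length s"
    and S: "S \<in> first_block_sets p s j L r"
  shows "{i \<in> S. i \<le> L} \<in> cluster_sets p (st (take L s)) r"
    and "{i. 0 < i \<and> L + i \<in> S} \<in> marked_sets p (st (drop L s)) (j - r)"
proof -
  let ?S1 = "{i \<in> S. i \<le> L}" and ?S2 = "{i. 0 < i \<and> L + i \<in> S}"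
  have m1: "length p \<ge> 1" using m by simp
  have SE: "S \<subseteq> Em p s" and cS: "card S = j" and one: "1 \<in> S" and fs: "first_split p S = L"
    and cr: "card ?S1 = r" using S by (auto simp: first_block_sets_def marked_sets_def)
  have n1: "length s \<ge> 1" using SE one Em_bounds[OF m1, of 1 s] m by auto
  note split = first_split_spec[OF m1 SE n1, unfolded fs]
  have S1E: "?S1 \<subseteq> Em p (st (take L s))"
  proof
    fix i assume i: "i \<in> ?S1"
    then have "i \<in> Em p s" "i + length p - 1 \<le> L" using SE split(2) by (auto simp: splits_at_def)
    then show "i \<in> Em p (st (take L s))" using Em_st_take[OF m1 L] Em_bounds(1)[OF m1] by blast
  qed
  have "is_cluster p (st (take L s)) ?S1"
  proof (rule is_cluster_if_not_splits_at[OF m S1E])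
    show "1 \<in> ?S1" using one split(1) by simp
    fix c assume c: "1 \<le> c" "c < length (st (take L s))"
    show "\<not> splits_at p ?S1 c"
    proof
      assume "splits_at p ?S1 c"
      then have "splits_at p S c" using c by (auto simp: splits_at_def)
      then show False using split(4)[of c] c L by simp
    qed
  qed
  then show "?S1 \<in> cluster_sets p (st (take L s)) r" using cr by (simp add: cluster_sets_def)
  have S2E: "?S2 \<subseteq> Em p (st (drop L s))" using SE Em_st_drop[OF m1 L] by auto
  have "card (?S1 \<union> (+) L ` ?S2) = card ?S1 + card ?S2"
    using finite_subset[OF S2E finite_Em] finite_subset[OF SE finite_Em]
    by (intro card_Un_shifted) auto
  then have "card S = card ?S1 + card ?S2" by (simp only: Un_shifted_split)
  then show "?S2 \<in> marked_sets p (st (drop L s)) (j - r)" using S2E cS cr by (simp add: marked_sets_def)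
qed

lemma card_first_block_sets:
  assumes m: "length p \<ge> 2" and L: "1 \<le> L" "L \<le> length s" and r: "r \<le> j"
  shows "card (first_block_sets p s j L r)
         = card (cluster_sets p (st (take L s)) r) * card (marked_sets p (st (drop L s)) (j - r))"
proof -
  let ?A = "cluster_sets p (st (take L s)) r \<times> marked_sets p (st (drop L s)) (j - r)"
  have m1: "length p \<ge> 1" using m by simp
  have "bij_betw (\<lambda>(S1, S2). S1 \<union> (+) L ` S2) ?A (first_block_sets p s j L r)"
  proof (rule bij_betw_byWitness[where f' = "\<lambda>S. ({i \<in> S. i \<le> L}, {i. 0 < i \<and> L + i \<in> S})"])
    show "\<forall>x\<in>?A. (\<lambda>S. ({i \<in> S. i \<le> L}, {i. 0 < i \<and> L + i \<in> S})) ((\<lambda>(S1, S2). S1 \<union> (+) L ` S2) x) = x"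
    proof
      fix x assume "x \<in> ?A"
      then obtain S1 S2 where x: "x = (S1, S2)" and S1: "S1 \<in> cluster_sets p (st (take L s)) r"
        and S2: "S2 \<in> marked_sets p (st (drop L s)) (j - r)" by auto
      have "i \<le> L" if "i \<in> S1" for i
      proof -
        have "i \<in> Em p (st (take L s))" using S1 that by (auto simp: cluster_sets_def is_cluster_def)
        then have "i + length p - 1 \<le> L" using Em_bounds(2)[OF m1] L by fastforce
        then show ?thesis using m1 by linarith
      qed
      moreover have "0 < i" if "i \<in> S2" for i
        using Em_bounds(1)[OF m1, of i] S2 that by (fastforce simp: marked_sets_def)
      ultimately show "(\<lambda>S. ({i \<in> S. i \<le> L}, {i. 0 < i \<and> L + i \<in> S})) ((\<lambda>(S1, S2). S1 \<union> (+) L ` S2) x) = x"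
        using Un_shifted_inverse[of S1 L S2] x by simp
    qed
    show "\<forall>S\<in>first_block_sets p s j L r. (\<lambda>(S1, S2). S1 \<union> (+) L ` S2)
            ({i \<in> S. i \<le> L}, {i. 0 < i \<and> L + i \<in> S}) = S"
      by (simp add: Un_shifted_split)
    show "(\<lambda>(S1, S2). S1 \<union> (+) L ` S2) ` ?A \<subseteq> first_block_sets p s j L r"
      using glue_mem_first_block_sets[OF m L r] by auto
    show "(\<lambda>S. ({i \<in> S. i \<le> L}, {i. 0 < i \<and> L + i \<in> S})) ` first_block_sets p s j L r \<subseteq> ?A"
      using cut_mem_first_block_sets[OF m L(2)] by auto
  qed
  then show ?thesis by (simp add: bij_betw_same_card[symmetric] card_cartesian_product)
qed

lemma card_marked_sets_decompose:
  assumes m: "length p \<ge> 2" and n: "length s \<ge> 1"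
  shows "card (marked_sets p s j) = card {S \<in> marked_sets p s j. 1 \<notin> S} +
    (\<Sum>L\<in>{1..length s}. \<Sum>r\<in>{1..j}. card (first_block_sets p s j L r))"
proof -
  let ?M = "marked_sets p s j"
  define block where "block S = (if 1 \<in> S then Some (first_split p S, card {i \<in> S. i \<le> first_split p S}) else None)" for S
  define T where "T = insert None (Some ` ({1..length s} \<times> {1..j}))"
  have "block ` ?M \<subseteq> T"
  proof
    fix y assume "y \<in> block ` ?M"
    then obtain S where S: "S \<in> ?M" "y = block S" by blast
    show "y \<in> T"
    proof (cases "1 \<in> S")
      case True
      have SE: "S \<subseteq> Em p s" and cS: "card S = j" using S by (auto simp: marked_sets_def)
      have fS: "finite S" by (rule finite_subset[OF SE finite_Em])
      note split = first_split_spec[OF _ SE n]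
      have "1 \<in> {i \<in> S. i \<le> first_split p S}" using True split(1) m by simp
      then have "card {i \<in> S. i \<le> first_split p S} \<ge> 1" using fS by (auto simp: Suc_le_eq card_gt_0_iff)
      moreover have "card {i \<in> S. i \<le> first_split p S} \<le> j" using cS fS by (auto intro: card_mono)
      ultimately show ?thesis using True split(1,3) m S(2) by (simp add: block_def T_def)
    qed (simp add: block_def T_def S(2))
  qed
  have blocks: "{S \<in> ?M. block S = Some (L, r)} = first_block_sets p s j L r" for L r
    by (auto simp: block_def first_block_sets_def)
  have "card ?M = (\<Sum>y\<in>T. card {S \<in> ?M. block S = y})"
    unfolding card_eq_sum by (intro sum.group[symmetric] \<open>block ` ?M \<subseteq> T\<close>) (auto simp: T_def)
  also have "\<dots> = card {S \<in> ?M. block S = None} +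
      (\<Sum>(L, r)\<in>{1..length s} \<times> {1..j}. card {S \<in> ?M. block S = Some (L, r)})"
    by (simp add: T_def sum.reindex inj_on_def)
  also have "{S \<in> ?M. block S = None} = {S \<in> ?M. 1 \<notin> S}"
    by (auto simp: block_def)
  finally show ?thesis by (simp add: blocks sum.cartesian_product)
qed

lemma marked_num_rec:
  assumes m: "length p \<ge> 2" and n: "n \<ge> 1"
  shows "marked_num p n j = n * marked_num p (n - 1) j +
     (\<Sum>L\<in>{1..n}. \<Sum>r\<in>{1..j}. (n choose L) * (cluster_num p L r * marked_num p (n - L) (j - r)))"
proof -
  have len: "length s = n" if "s \<in> perms n" for s using that by (simp add: perms_def is_perm_def)
  have "marked_num p n j = (\<Sum>s\<in>perms n. card {S \<in> marked_sets p s j. 1 \<notin> S} +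
    (\<Sum>L\<in>{1..n}. \<Sum>r\<in>{1..j}. card (first_block_sets p s j L r)))"
    unfolding marked_num_def using card_marked_sets_decompose[OF m] len n by (intro sum.cong) auto
  also have "\<dots> = (\<Sum>s\<in>perms n. 1 * card (marked_sets p (st (drop 1 s)) j)) +
    (\<Sum>s\<in>perms n. \<Sum>L\<in>{1..n}. \<Sum>r\<in>{1..j}.
       card (cluster_sets p (st (take L s)) r) * card (marked_sets p (st (drop L s)) (j - r)))"
    unfolding sum.distrib using m n len card_marked_sets_not_1 card_first_block_sets[OF m]
    by (intro arg_cong2[where f = "(+)"] sum.cong) auto
  also have "(\<Sum>s\<in>perms n. 1 * card (marked_sets p (st (drop 1 s)) j)) = n * marked_num p (n - 1) j"
    using sum_perms_split[of 1 n "\<lambda>_. 1" "\<lambda>w. card (marked_sets p w j)"] n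
    by (simp add: perms_1[unfolded One_nat_def] marked_num_def)
  also have "(\<Sum>s\<in>perms n. \<Sum>L\<in>{1..n}. \<Sum>r\<in>{1..j}.
       card (cluster_sets p (st (take L s)) r) * card (marked_sets p (st (drop L s)) (j - r)))
     = (\<Sum>L\<in>{1..n}. \<Sum>r\<in>{1..j}. \<Sum>s\<in>perms n.
       card (cluster_sets p (st (take L s)) r) * card (marked_sets p (st (drop L s)) (j - r)))"
    by (subst sum.swap) (rule sum.cong[OF refl], rule sum.swap)
  also have "\<dots> = (\<Sum>L\<in>{1..n}. \<Sum>r\<in>{1..j}. (n choose L) * (cluster_num p L r * marked_num p (n - L) (j - r)))"
    by (intro sum.cong refl, subst sum_perms_split) (auto simp: cluster_num_eq_sum marked_num_def)
  finally show ?thesis .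
qed

lemma cluster_num_0_left: "length p \<ge> 1 \<Longrightarrow> cluster_num p 0 j = 0"
  by (simp add: cluster_num_eq_sum perms_0 cluster_sets_def is_cluster_def Em_Nil)

lemma cluster_num_0_right: "cluster_num p n 0 = 0"
proof -
  have "card S \<noteq> 0" if "is_cluster p s S" for s S
    using that finite_subset[OF _ finite_Em] by (auto simp: is_cluster_def)
  then have "cluster_sets p s 0 = {}" for s by (auto simp: cluster_sets_def)
  then show ?thesis by (simp add: cluster_num_eq_sum)
qed

lemma marked_num_0: "length p \<ge> 1 \<Longrightarrow> marked_num p 0 j = (if j = 0 then 1 else 0)"
  by (simp add: marked_num_def perms_0 card_marked_sets Em_Nil)

lemma cluster_num_eq_if_marked_num_eq:
  assumes mp: "length p \<ge> 2" and mt: "length t \<ge> 2"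
    and eq: "\<And>n j. marked_num p n j = marked_num t n j"
  shows "cluster_num p n j = cluster_num t n j"
proof (induction n arbitrary: j rule: less_induct)
  case (less n)
  show ?case
  proof (cases "n = 0 \<or> j = 0")
    case True
    then show ?thesis using cluster_num_0_left mp mt cluster_num_0_right by auto
  next
    case False
    then have n: "n \<ge> 1" and j: "j \<ge> 1" by auto
    have split: "marked_num q n j = n * marked_num q (n - 1) j
       + (\<Sum>L\<in>{1..<n}. \<Sum>r\<in>{1..j}. (n choose L) * (cluster_num q L r * marked_num q (n - L) (j - r)))
       + cluster_num q n j" if q: "length q \<ge> 2" for q
    proof -
      have "{1..n} = insert n {1..<n}" using n by auto
      moreover have "(\<Sum>r\<in>{1..j}. (n choose n) * (cluster_num q n r * marked_num q (n - n) (j - r)))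
          = (\<Sum>r\<in>{1..j}. if r = j then cluster_num q n r else 0)"
        using marked_num_0[of q] q by (intro sum.cong) auto
      moreover have "\<dots> = cluster_num q n j" using j by simp
      ultimately show ?thesis using marked_num_rec[OF q n, of j] by simp
    qed
    have "(\<Sum>L\<in>{1..<n}. \<Sum>r\<in>{1..j}. (n choose L) * (cluster_num p L r * marked_num p (n - L) (j - r)))
        = (\<Sum>L\<in>{1..<n}. \<Sum>r\<in>{1..j}. (n choose L) * (cluster_num t L r * marked_num t (n - L) (j - r)))"
      using less.IH eq by (intro sum.cong refl) auto
    moreover have "n * marked_num p (n - 1) j = n * marked_num t (n - 1) j" using eq by simp
    ultimately show ?thesis using split[OF mp] split[OF mt] eq[of n j] by linarith
  qed
qed

lemma marked_num_eq_sum_occ_num: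
  assumes m: "length p \<ge> 1"
  shows "marked_num p n j = (\<Sum>k\<le>n. occ_num p n k * (k choose j))"
proof -
  have "(\<lambda>s. card (Em p s)) ` perms n \<subseteq> {..n}"
  proof
    fix y assume "y \<in> (\<lambda>s. card (Em p s)) ` perms n"
    then obtain s where s: "s \<in> perms n" "y = card (Em p s)" by blast
    have "Em p s \<subseteq> {1..length s}"
    proof
      fix i assume "i \<in> Em p s"
      then have "1 \<le> i" "i + length p - 1 \<le> length s" by (rule Em_bounds[OF m])+
      then show "i \<in> {1..length s}" using m by simp
    qed
    then have "card (Em p s) \<le> length s" using card_mono[of "{1..length s}"] by fastforce
    then show "y \<in> {..n}" using s by (simp add: perms_def is_perm_def)
  qed
  then have "marked_num p n j = (\<Sum>k\<le>n. \<Sum>s\<in>{s \<in> perms n. card (Em p s) = k}. card (Em p s) choose j)"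
    unfolding marked_num_def card_marked_sets by (intro sum.group[symmetric]) simp_all
  also have "\<dots> = (\<Sum>k\<le>n. occ_num p n k * (k choose j))"
    by (intro sum.cong refl) (simp add: occ_num_def perms_def)
  finally show ?thesis .
qed

lemma cluster_num_eq_if_strongly_cwilf_equiv:
  assumes "length p \<ge> 2" "length t \<ge> 2" "strongly_cwilf_equiv p t"
  shows "cluster_num p n j = cluster_num t n j"
  using assms marked_num_eq_sum_occ_num
  by (intro cluster_num_eq_if_marked_num_eq) (simp_all add: strongly_cwilf_equiv_def)

section \<open>Clusters of minimal length\<close>

definition chain_perms :: "nat list \<Rightarrow> nat \<Rightarrow> nat list set" where
  "chain_perms p k = {s. is_perm (1 + k * (length p - 1)) s \<and>
      (\<forall>i<k. st (take (length p) (drop (i * (length p - 1)) s)) = p)}"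

lemma finite_chain_perms [simp]: "finite (chain_perms p k)"
  by (rule finite_subset[OF _ finite_perms]) (auto simp: chain_perms_def perms_def)

lemma st_singleton [simp]: "st [x] = [1]"
proof -
  have "{y \<in> set [x]. y \<le> x} = {x}" by auto
  then show ?thesis by (simp add: st_def)
qed

lemma length_minus_1_mem_overlaps:
  assumes "length p \<ge> 2"
  shows "length p - 1 \<in> overlaps p"
proof -
  have "drop (length p - 1) p = [p ! (length p - 1)]"
    using Cons_nth_drop_Suc[of "length p - 1" p] assms by simp
  moreover have "take (length p - (length p - 1)) p = [p ! 0]"
    using assms by (cases p) auto
  ultimately show ?thesis using assms by (simp add: overlaps_def)
qed

lemma nth_eq_arith_progression:
  fixes xs :: "nat list"
  assumes first: "xs ! 0 = a" and last: "xs ! (k - 1) = a + (k - 1) * M"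
    and step: "\<And>j. j + 1 < k \<Longrightarrow> xs ! (j + 1) \<le> xs ! j + M"
    and j: "j < k"
  shows "xs ! j = a + j * M"
proof -
  have steps: "xs ! (i + d) \<le> xs ! i + d * M" if "i + d < k" for i d
    using that
  proof (induction d)
    case (Suc d)
    then show ?case using step[of "i + d"] by simp
  qed simp
  have "a + (k - 1) * M \<le> xs ! j + (k - 1 - j) * M"
    using steps[of j "k - 1 - j"] j last by simp
  moreover have "(k - 1) * M = j * M + (k - 1 - j) * M"
    using j by (simp add: add_mult_distrib[symmetric])
  ultimately have "a + j * M \<le> xs ! j" by linarith
  moreover have "xs ! j \<le> a + j * M" using steps[of 0 j] j first by simp
  ultimately show ?thesis by simp
qed

lemma cluster_eq_chain_positions:
  assumes m: "length p = Suc M" and len: "length s = 1 + k * M"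
    and cl: "is_cluster p s S" and card: "card S = k"
  shows "S = (\<lambda>i. 1 + i * M) ` {..<k}"
proof -
  let ?xs = "sorted_list_of_set S"
  note xs = is_cluster_nth_sorted_list_of_set[OF cl, unfolded card]
  have last: "?xs ! (k - 1) = 1 + (k - 1) * M"
    using xs(4) m len xs(2) by (cases k) (auto simp: algebra_simps)
  have step: "?xs ! (j + 1) \<le> ?xs ! j + M" if "j + 1 < k" for j
  proof -
    have "?xs ! (j + 1) - ?xs ! j \<le> M" using xs(5)[OF that] m by (simp add: overlaps_def)
    then show ?thesis by linarith
  qed
  have "S = (nth ?xs) ` {..<k}"
    using in_sorted_list_of_set_conv_nth[OF xs(1)] card by auto
  also have "\<dots> = (\<lambda>i. 1 + i * M) ` {..<k}"
    using nth_eq_arith_progression[OF xs(3) last step] by simp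
  finally show ?thesis .
qed

lemma is_cluster_chain_positions:
  assumes m: "length p = Suc M" "M \<ge> 1" and k: "k \<ge> 1" and s: "s \<in> chain_perms p k"
  shows "is_cluster p s ((\<lambda>i. 1 + i * M) ` {..<k})"
proof -
  let ?S = "(\<lambda>i. 1 + i * M) ` {..<k}"
  define ys where "ys = map (\<lambda>i. 1 + i * M) [0..<k]"
  have len: "length s = 1 + k * M" using s m by (simp add: chain_perms_def is_perm_def)
  have "?S \<subseteq> Em p s"
  proof
    fix x assume "x \<in> ?S"
    then obtain i where i: "i < k" "x = 1 + i * M" by auto
    have "(i + 1) * M \<le> k * M" using i by (intro mult_right_mono) auto
    then have "x + length p - 1 \<le> length s" using i m len by (simp add: algebra_simps)
    then show "x \<in> Em p s" using Em_iff[of p] s i m by (simp add: chain_perms_def)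
  qed
  moreover have "sorted_list_of_set ?S = ys"
  proof -
    have "sorted_wrt (<) ys" unfolding ys_def sorted_wrt_iff_nth_less using m by auto
    moreover have "?S = set ys" by (simp add: ys_def atLeast0LessThan)
    ultimately show ?thesis by (simp add: sorted_list_of_set.idem_if_sorted_distinct strict_sorted_iff)
  qed
  moreover have "hd ys = 1" "last ys = length s - length p + 1"
    using k m len by (simp_all add: ys_def hd_map last_map algebra_simps)
  moreover have "ys ! (j + 1) - ys ! j \<in> overlaps p" if "j + 1 < length ys" for j
    using that length_minus_1_mem_overlaps[of p] m by (auto simp: ys_def)
  moreover have "?S \<noteq> {}" using k by (auto simp: lessThan_empty_iff)
  ultimately show ?thesis by (simp add: is_cluster_def Let_def)
qed

lemma cluster_num_eq_card_chain_perms: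
  assumes m: "length p = Suc M" "M \<ge> 1" and k: "k \<ge> 1"
  shows "cluster_num p (1 + k * M) k = card (chain_perms p k)"
proof -
  let ?S = "(\<lambda>i. 1 + i * M) ` {..<k}"
  have card_S: "card ?S = k" using m by (simp add: card_image inj_on_def)
  have "{(s, S). is_perm (1 + k * M) s \<and> is_cluster p s S \<and> card S = k} = (\<lambda>s. (s, ?S)) ` chain_perms p k"
  proof (intro set_eqI iffI)
    fix x assume "x \<in> {(s, S). is_perm (1 + k * M) s \<and> is_cluster p s S \<and> card S = k}"
    then obtain s S where x: "x = (s, S)" and s: "is_perm (1 + k * M) s" and cl: "is_cluster p s S"
      and "card S = k" by blast
    have "length s = 1 + k * M" using s by (simp add: is_perm_def)
    then have S: "S = ?S" using cluster_eq_chain_positions[OF m(1) _ cl \<open>card S = k\<close>] by simp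
    have "st (take (length p) (drop (i * M) s)) = p" if "i < k" for i
    proof -
      have "1 + i * M \<in> Em p s" using S cl that by (auto simp: is_cluster_def)
      then show ?thesis using Em_iff[of p] m by simp
    qed
    then have "s \<in> chain_perms p k" using s m by (simp add: chain_perms_def)
    then show "x \<in> (\<lambda>s. (s, ?S)) ` chain_perms p k" using x S by blast
  next
    fix x assume "x \<in> (\<lambda>s. (s, ?S)) ` chain_perms p k"
    then show "x \<in> {(s, S). is_perm (1 + k * M) s \<and> is_cluster p s S \<and> card S = k}"
      using is_cluster_chain_positions[OF m k] card_S m by (auto simp: chain_perms_def)
  qed
  then show ?thesis by (simp add: cluster_num_def card_image inj_on_def)
qed

section \<open>Counting chain permutations\<close>

lemma mult_block_unique:
  fixes c c' k w :: nat
  assumes "c * k < w" "w \<le> (c + 1) * k" "c' * k < w" "w \<le> (c' + 1) * k"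
  shows "c = c'"
proof (rule ccontr)
  assume "c \<noteq> c'"
  then have "c + 1 \<le> c' \<or> c' + 1 \<le> c" by arith
  then have "(c + 1) * k \<le> c' * k \<or> (c' + 1) * k \<le> c * k" using mult_right_mono by blast
  then show False using assms by linarith
qed

lemma mult_add_eq_mult_addD:
  fixes c c' x y k :: nat
  assumes "x < k" "y < k" "c * k + x = c' * k + y"
  shows "c = c' \<and> x = y"
  using arg_cong[OF assms(3), of "\<lambda>n. n div k"] arg_cong[OF assms(3), of "\<lambda>n. n mod k"] assms(1,2)
  by simp

lemma perm_eq_if_eq_off_and_same_order:
  assumes s: "is_perm n s" and s': "is_perm n s'" and C: "C \<subseteq> {..<n}"
    and off: "\<And>q. q < n \<Longrightarrow> q \<notin> C \<Longrightarrow> s ! q = s' ! q"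
    and ord: "\<And>q q'. q \<in> C \<Longrightarrow> q' \<in> C \<Longrightarrow> s ! q < s ! q' \<longleftrightarrow> s' ! q < s' ! q'"
  shows "s = s'"
proof -
  have ls: "length s = n" "length s' = n" using s s' by (auto simp: is_perm_def)
  have inj: "inj_on (nth s) {..<n}" "inj_on (nth s') {..<n}"
    using s s' ls by (auto simp: is_perm_def inj_on_def nth_eq_iff_index_eq)
  have img: "nth s ` {..<n} = {1..n}" "nth s' ` {..<n} = {1..n}"
    using s s' ls by (auto simp: is_perm_def set_conv_nth)
  have "nth s ` ({..<n} - C) = nth s' ` ({..<n} - C)" using off by (intro image_cong) auto
  then have V: "nth s' ` C = nth s ` C"
    using inj_on_image_set_diff[OF inj(1), of "{..<n}" "{..<n} - C"]
      inj_on_image_set_diff[OF inj(2), of "{..<n}" "{..<n} - C"] img C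
    by (simp add: double_diff)
  have rank: "card {x \<in> nth s ` C. x < t ! q} = card {q' \<in> C. t ! q' < t ! q}"
    if "t = s \<or> t = s'" and q: "q \<in> C" for t q
  proof -
    have "inj_on (nth t) C" using that inj C inj_on_subset by blast
    moreover have "nth t ` C = nth s ` C" using that V by auto
    then have "{x \<in> nth s ` C. x < t ! q} = nth t ` {q' \<in> C. t ! q' < t ! q}"
      by (auto simp flip: \<open>nth t ` C = nth s ` C\<close>)
    ultimately show ?thesis by (simp add: card_image inj_on_subset)
  qed
  have fin: "finite (nth s ` C)" using finite_subset[OF C finite_lessThan] by simp
  have strict: "strict_mono_on (nth s ` C) (\<lambda>x. card {y \<in> nth s ` C. y < x})"
  proof (rule strict_mono_onI)
    fix x y assume "x \<in> nth s ` C" "y \<in> nth s ` C" "x < y"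
    then have "{z \<in> nth s ` C. z < x} \<subset> {z \<in> nth s ` C. z < y}" by auto
    then show "card {z \<in> nth s ` C. z < x} < card {z \<in> nth s ` C. z < y}"
      using fin by (intro psubset_card_mono) auto
  qed
  show ?thesis
  proof (rule nth_equalityI)
    fix q assume "q < length s"
    then have q: "q < n" using ls by simp
    show "s ! q = s' ! q"
    proof (cases "q \<in> C")
      case True
      have "{q' \<in> C. s ! q' < s ! q} = {q' \<in> C. s' ! q' < s' ! q}" using ord[OF _ True] by blast
      then have "card {x \<in> nth s ` C. x < s ! q} = card {x \<in> nth s ` C. x < s' ! q}"
        using rank[of s q] rank[of s' q] True by simp
      moreover have "s ! q \<in> nth s ` C" "s' ! q \<in> nth s ` C" using True V by auto
      ultimately show ?thesis using strict_mono_on_eq[OF strict] by blast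
    qed (use off q in simp)
  qed (use ls in simp)
qed

definition outer_count :: "nat list \<Rightarrow> nat" where
  "outer_count p = (p ! 0 - 1) + (length p - p ! (length p - 1))"

locale chain_pattern =
  fixes p :: "nat list" and M k :: nat
  assumes perm: "is_perm (Suc M) p" and M_pos: "1 \<le> M" and rising: "p ! 0 < p ! M"
begin

lemma length_p: "length p = Suc M"
  using perm by (simp add: is_perm_def)

lemma distinct_p: "distinct p"
  using perm by (simp add: is_perm_def)

lemma set_p: "set p = {1..Suc M}"
  using perm by (simp add: is_perm_def)

lemma nth_p_range: "j < Suc M \<Longrightarrow> p ! j \<in> {1..Suc M}"
  using set_p length_p by (metis nth_mem)

lemma first_last_bounds: "1 \<le> p ! 0" "p ! M \<le> Suc M"
  using nth_p_range[of 0] nth_p_range[of M] by auto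

lemma outer_count_p: "outer_count p = (p ! 0 - 1) + (Suc M - p ! M)"
  by (simp add: outer_count_def length_p)

lemma chain_perm_window_less_iff:
  assumes s: "s \<in> chain_perms p k" and i: "i < k" and j: "j \<le> M" "j' \<le> M"
  shows "s ! (i * M + j) < s ! (i * M + j') \<longleftrightarrow> p ! j < p ! j'"
proof -
  define w where "w = take (Suc M) (drop (i * M) s)"
  have ls: "length s = 1 + k * M" using s length_p by (simp add: chain_perms_def is_perm_def)
  have "(i + 1) * M \<le> k * M" using i by (intro mult_right_mono) auto
  then have lw: "length w = Suc M" using ls by (simp add: w_def algebra_simps)
  have "st w = p" using s i length_p by (simp add: chain_perms_def w_def)
  moreover have "w ! x = s ! (i * M + x)" if "x \<le> M" for x
    using that lw by (simp add: w_def nth_take nth_drop)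
  ultimately show ?thesis using st_nth_less_iff[of j w j'] j lw by simp
qed

lemma chain_perm_junction_mono:
  assumes s: "s \<in> chain_perms p k" and "i \<le> i'" "i' \<le> k"
  shows "s ! (i * M) \<le> s ! (i' * M)"
  using assms(2,3)
proof (induction i' rule: dec_induct)
  case (step i')
  have "s ! (i' * M + 0) < s ! (i' * M + M)"
    using chain_perm_window_less_iff[OF s, of i' 0 M] step rising by simp
  then show ?case using step by (simp add: algebra_simps)
qed simp

lemma div_le_count: "q < 1 + k * M \<Longrightarrow> q div M \<le> k"
  using div_le_mono[of q "k * M" M] M_pos by simp

lemma eq_last_if_not_div_less: "q < 1 + k * M \<Longrightarrow> \<not> q div M < k \<Longrightarrow> q = k * M"
  using div_times_less_eq_dividend[of q M] mult_right_mono[of k "q div M" M] by linarith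

text \<open>The entries at these positions lie between the first and the last entry of their window,
  and these increase along the chain, so their relative order is the same in all chain
  permutations.\<close>

definition forced_positions :: "nat set" where
  "forced_positions = {q. q < 1 + k * M \<and> p ! 0 \<le> p ! (q mod M) \<and> p ! (q mod M) < p ! M}"

lemma chain_perm_forced_between:
  assumes s: "s \<in> chain_perms p k" and q: "q \<in> forced_positions" and i: "q div M < k"
  shows "s ! ((q div M) * M) \<le> s ! q" "s ! q < s ! ((q div M + 1) * M)"
proof -
  let ?i = "q div M" and ?j = "q mod M"
  have j: "?j < M" using M_pos by simp
  have qc: "p ! 0 \<le> p ! ?j" "p ! ?j < p ! M" using q by (auto simp: forced_positions_def)
  have "s ! (?i * M + 0) \<le> s ! (?i * M + ?j)"
  proof (cases "?j = 0")
    case False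
    then have "p ! 0 \<noteq> p ! ?j" using distinct_p length_p j by (simp add: nth_eq_iff_index_eq)
    then show ?thesis using qc chain_perm_window_less_iff[OF s i, of 0 ?j] j by simp
  qed simp
  moreover have "s ! (?i * M + ?j) < s ! (?i * M + M)"
    using chain_perm_window_less_iff[OF s i, of ?j M] j qc by simp
  ultimately show "s ! (?i * M) \<le> s ! q" "s ! q < s ! ((?i + 1) * M)"
    by (simp_all add: algebra_simps)
qed

lemma chain_perm_forced_less_iff:
  assumes s: "s \<in> chain_perms p k" and q: "q \<in> forced_positions" and q': "q' \<in> forced_positions"
  shows "s ! q < s ! q' \<longleftrightarrow>
     q div M < q' div M \<or> (q div M = q' div M \<and> p ! (q mod M) < p ! (q' mod M))"
proof -
  let ?i = "q div M" and ?i' = "q' div M"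
  have qn: "q < 1 + k * M" "q' < 1 + k * M" using q q' by (auto simp: forced_positions_def)
  have lo: "s ! (x div M * M) \<le> s ! x" if "x \<in> forced_positions" "x < 1 + k * M" for x
    using chain_perm_forced_between(1)[OF s that(1)] eq_last_if_not_div_less[OF that(2)] M_pos
    by (cases "x div M < k") auto
  consider "?i < ?i'" | "?i' < ?i" | "?i = ?i'" by arith
  then show ?thesis
  proof cases
    case 1
    then have "s ! ((?i + 1) * M) \<le> s ! (?i' * M)"
      using chain_perm_junction_mono[OF s, of "?i + 1" ?i'] div_le_count[OF qn(2)] by simp
    then have "s ! q < s ! q'"
      using chain_perm_forced_between(2)[OF s q] 1 div_le_count[OF qn(2)] lo[OF q' qn(2)] by linarith
    then show ?thesis using 1 by simp
  next
    case 2
    then have "s ! ((?i' + 1) * M) \<le> s ! (?i * M)"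
      using chain_perm_junction_mono[OF s, of "?i' + 1" ?i] div_le_count[OF qn(1)] by simp
    then have "s ! q' < s ! q"
      using chain_perm_forced_between(2)[OF s q'] 2 div_le_count[OF qn(1)] lo[OF q qn(1)] by linarith
    then show ?thesis using 2 by simp
  next
    case 3
    show ?thesis
    proof (cases "?i < k")
      case True
      have "s ! (?i * M + q mod M) < s ! (?i * M + q' mod M) \<longleftrightarrow> p ! (q mod M) < p ! (q' mod M)"
        using chain_perm_window_less_iff[OF s True, of "q mod M" "q' mod M"] M_pos by (simp add: less_imp_le)
      moreover have "?i * M + q mod M = q" by simp
      moreover have "?i * M + q' mod M = q'" using 3 by (metis div_mult_mod_eq)
      ultimately show ?thesis using 3 by simp
    next
      case False
      then have "q = k * M" "q' = k * M" using eq_last_if_not_div_less qn 3 by auto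
      then show ?thesis by simp
    qed
  qed
qed

definition outer_values :: "nat set" where
  "outer_values = {v \<in> {1..Suc M}. v < p ! 0 \<or> p ! M < v}"

lemma card_outer_values: "card outer_values = outer_count p"
proof -
  have "outer_values = {1..<p ! 0} \<union> {p ! M<..Suc M}"
    using first_last_bounds rising by (auto simp: outer_values_def)
  then show ?thesis
    using rising by (simp, subst card_Un_disjoint) (auto simp: outer_count_p)
qed

lemma card_free_window_positions:
  "card {j. j < M \<and> \<not> (p ! 0 \<le> p ! j \<and> p ! j < p ! M)} = outer_count p"
proof -
  have "{j. j < M \<and> \<not> (p ! 0 \<le> p ! j \<and> p ! j < p ! M)} = {j. j < Suc M \<and> (p ! j < p ! 0 \<or> p ! M < p ! j)}"
    using distinct_p length_p rising by (auto simp: nth_eq_iff_index_eq less_Suc_eq)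
  also have "card \<dots> = card outer_values"
    using card_set_filter_conv_nth[OF distinct_p] set_p length_p by (simp add: outer_values_def)
  finally show ?thesis by (simp add: card_outer_values)
qed

definition free_positions :: "nat set" where
  "free_positions = {q. q < 1 + k * M \<and> q \<notin> forced_positions}"

lemma chain_perm_eq_if_eq_on_free_positions:
  assumes s: "s \<in> chain_perms p k" and s': "s' \<in> chain_perms p k"
    and eq: "\<And>q. q \<in> free_positions \<Longrightarrow> s ! q = s' ! q"
  shows "s = s'"
proof -
  have "is_perm (1 + k * M) s" "is_perm (1 + k * M) s'" using s s' length_p by (auto simp: chain_perms_def)
  then show "s = s'"
  proof (rule perm_eq_if_eq_off_and_same_order)
    show "forced_positions \<subseteq> {..<1 + k * M}" by (auto simp: forced_positions_def)
    show "s ! q = s' ! q" if "q < 1 + k * M" "q \<notin> forced_positions" for q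
      using eq that by (simp add: free_positions_def)
    show "s ! q < s ! q' \<longleftrightarrow> s' ! q < s' ! q'" if "q \<in> forced_positions" "q' \<in> forced_positions" for q q'
      using chain_perm_forced_less_iff[OF s that] chain_perm_forced_less_iff[OF s' that] by simp
  qed
qed

lemma card_free_positions_le: "card free_positions \<le> k * outer_count p"
proof -
  let ?J = "{j. j < M \<and> \<not> (p ! 0 \<le> p ! j \<and> p ! j < p ! M)}"
  have "free_positions \<subseteq> (\<lambda>(i, j). i * M + j) ` ({..<k} \<times> ?J)"
  proof
    fix q assume q: "q \<in> free_positions"
    then have qn: "q < 1 + k * M" and qc: "q \<notin> forced_positions" by (auto simp: free_positions_def)
    have "q div M < k"
    proof (rule ccontr)
      assume "\<not> q div M < k"
      then have "q = k * M" using eq_last_if_not_div_less[OF qn] by blast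
      then have "q \<in> forced_positions" using rising by (simp add: forced_positions_def)
      then show False using qc by simp
    qed
    moreover have "q mod M \<in> ?J" using qc qn M_pos by (simp add: forced_positions_def)
    ultimately show "q \<in> (\<lambda>(i, j). i * M + j) ` ({..<k} \<times> ?J)"
      by (intro image_eqI[of _ _ "(q div M, q mod M)"]) auto
  qed
  then have "card free_positions \<le> card ((\<lambda>(i, j). i * M + j) ` ({..<k} \<times> ?J))"
    by (rule card_mono[rotated]) simp
  also have "\<dots> \<le> k * card ?J"
    using card_image_le[of "{..<k} \<times> ?J" "\<lambda>(i, j). i * M + j"] by (simp add: card_cartesian_product)
  finally show ?thesis using card_free_window_positions by simp
qed

lemma card_chain_perms_le: "card (chain_perms p k) \<le> (1 + k * M) ^ (k * outer_count p)"
proof -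
  let ?n = "1 + k * M"
  let ?restr = "\<lambda>s. restrict (\<lambda>q. s ! q) free_positions"
  have "inj_on ?restr (chain_perms p k)"
    using chain_perm_eq_if_eq_on_free_positions
    by (intro inj_onI) (metis restrict_apply')
  moreover have "?restr ` chain_perms p k \<subseteq> PiE free_positions (\<lambda>_. {1..?n})"
  proof
    fix f assume "f \<in> ?restr ` chain_perms p k"
    then obtain s where s: "s \<in> chain_perms p k" "f = ?restr s" by blast
    then have s_perm: "is_perm ?n s" using length_p by (simp add: chain_perms_def)
    have "s ! q \<in> {1..?n}" if "q \<in> free_positions" for q
    proof -
      have "q < length s" using that s_perm by (simp add: free_positions_def is_perm_def)
      then show ?thesis using s_perm nth_mem[of q s] by (simp add: is_perm_def)
    qed
    then show "f \<in> PiE free_positions (\<lambda>_. {1..?n})" using s by simp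
  qed
  ultimately have "card (chain_perms p k) \<le> card (PiE free_positions (\<lambda>_. {1..?n}))"
    by (intro card_inj_on_le) (auto simp: finite_PiE free_positions_def)
  also have "\<dots> = ?n ^ card free_positions" by (simp add: card_PiE free_positions_def)
  also have "\<dots> \<le> ?n ^ (k * outer_count p)" by (rule power_increasing[OF card_free_positions_le]) simp
  finally show ?thesis .
qed

definition shuffles :: "(nat \<Rightarrow> nat \<Rightarrow> nat) set" where
  "shuffles = PiE outer_values (\<lambda>_. {f. f permutes {..<k}})"

definition inner_top :: nat where
  "inner_top = (p ! 0 - 1) * k + 1 + (p ! M - p ! 0) * k"

text \<open>The values below \<open>p ! 0\<close> and
  above \<open>p ! M\<close> each own a block of \<open>k\<close> consecutive values, distributed over the windows
  by the permutation \<open>\<sigma> v\<close>; the values in between increase from window to window, which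
  makes the last entry of window \<open>i\<close> equal to the first entry of window \<open>i + 1\<close>.\<close>

definition window_value :: "(nat \<Rightarrow> nat \<Rightarrow> nat) \<Rightarrow> nat \<Rightarrow> nat \<Rightarrow> nat" where
  "window_value \<sigma> i v = (if v < p ! 0 then (v - 1) * k + \<sigma> v i + 1
      else if v \<le> p ! M then (p ! 0 - 1) * k + 1 + i * (p ! M - p ! 0) + (v - p ! 0)
      else inner_top + (v - p ! M - 1) * k + \<sigma> v i + 1)"

text \<open>Position \<open>q\<close> of a chain permutation is the slot \<open>(q div M, p ! (q mod M))\<close>: the entry
  shared by windows \<open>i\<close> and \<open>i + 1\<close> is the slot \<open>(i + 1, p ! 0)\<close>, and the last entry is the
  slot \<open>(k, p ! 0)\<close>.\<close>

definition slots :: "(nat \<times> nat) set" where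
  "slots = {(i, v). i < k \<and> v \<in> {1..Suc M} \<and> v \<noteq> p ! M} \<union> {(k, p ! 0)}"

definition shuffle_perm :: "(nat \<Rightarrow> nat \<Rightarrow> nat) \<Rightarrow> nat list" where
  "shuffle_perm \<sigma> = map (\<lambda>q. window_value \<sigma> (q div M) (p ! (q mod M))) [0..<1 + k * M]"

lemma inner_top_add: "inner_top + (Suc M - p ! M) * k = 1 + k * M"
proof -
  have "(p ! 0 - 1) + (p ! M - p ! 0) + (Suc M - p ! M) = M"
    using first_last_bounds rising by linarith
  then have "((p ! 0 - 1) + (p ! M - p ! 0) + (Suc M - p ! M)) * k = k * M" by simp
  then show ?thesis by (simp add: inner_top_def algebra_simps)
qed

lemma shuffle_less: "\<sigma> \<in> shuffles \<Longrightarrow> v \<in> outer_values \<Longrightarrow> i < k \<Longrightarrow> \<sigma> v i < k"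
  by (auto simp: shuffles_def dest: permutes_in_image[of _ "{..<k}" i])

lemma inj_shuffle: "\<sigma> \<in> shuffles \<Longrightarrow> v \<in> outer_values \<Longrightarrow> inj (\<sigma> v)"
  by (auto simp: shuffles_def intro: permutes_inj)

lemma window_value_low:
  assumes \<sigma>: "\<sigma> \<in> shuffles" and i: "i < k" and v: "1 \<le> v" "v < p ! 0"
  shows "(v - 1) * k < window_value \<sigma> i v" "window_value \<sigma> i v \<le> v * k"
proof -
  have "\<sigma> v i < k" using shuffle_less[OF \<sigma> _ i, of v] v first_last_bounds rising
    by (auto simp: outer_values_def)
  then show "(v - 1) * k < window_value \<sigma> i v" "window_value \<sigma> i v \<le> v * k"
    using v mult_Suc[of "v - 1" k] by (simp_all add: window_value_def)
qed

lemma window_value_mid: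
  assumes v: "p ! 0 \<le> v" "v \<le> p ! M" and i: "i < k \<or> i = k \<and> v = p ! 0"
  shows "(p ! 0 - 1) * k < window_value \<sigma> i v" "window_value \<sigma> i v \<le> inner_top"
proof -
  have "i * (p ! M - p ! 0) + (v - p ! 0) \<le> (p ! M - p ! 0) * k"
    using i v mult_right_mono[of "Suc i" k "p ! M - p ! 0"] by (auto simp: mult.commute)
  then show "(p ! 0 - 1) * k < window_value \<sigma> i v" "window_value \<sigma> i v \<le> inner_top"
    using v rising by (auto simp: window_value_def inner_top_def)
qed

lemma window_value_high:
  assumes \<sigma>: "\<sigma> \<in> shuffles" and i: "i < k" and v: "p ! M < v" "v \<le> Suc M"
  shows "inner_top + (v - p ! M - 1) * k < window_value \<sigma> i v"
    "window_value \<sigma> i v \<le> inner_top + (v - p ! M) * k"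
proof -
  have "\<sigma> v i < k" using shuffle_less[OF \<sigma> _ i, of v] v rising by (auto simp: outer_values_def)
  moreover have "(v - p ! M) * k = (v - p ! M - 1) * k + k" using v(1) by (cases "v - p ! M") auto
  ultimately show "inner_top + (v - p ! M - 1) * k < window_value \<sigma> i v"
    "window_value \<sigma> i v \<le> inner_top + (v - p ! M) * k"
    using v rising by (simp_all add: window_value_def)
qed

lemma window_value_strict_mono:
  assumes \<sigma>: "\<sigma> \<in> shuffles" and i: "i < k" and v: "v \<in> {1..Suc M}" "v' \<in> {1..Suc M}" and "v < v'"
  shows "window_value \<sigma> i v < window_value \<sigma> i v'"
proof -
  let ?a = "p ! 0" and ?b = "p ! M"
  have low_le: "v * k \<le> (?a - 1) * k" if "v < ?a"
    using that by (intro mult_right_mono) auto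
  have mid_lt: "(?a - 1) * k < inner_top" by (simp add: inner_top_def)
  have v1: "1 \<le> v" "1 \<le> v'" and vM: "v \<le> Suc M" "v' \<le> Suc M" using v by auto
  consider
      (LL) "v' < ?a" | (LC) "v < ?a" "?a \<le> v'" "v' \<le> ?b" | (LU) "v < ?a" "?b < v'"
    | (CC) "?a \<le> v" "v' \<le> ?b" | (CU) "?a \<le> v" "v \<le> ?b" "?b < v'" | (UU) "?b < v"
    using \<open>v < v'\<close> by linarith
  then show ?thesis
  proof cases
    case LL
    have "v * k \<le> (v' - 1) * k" using \<open>v < v'\<close> by (intro mult_right_mono) auto
    moreover have "v < ?a" using LL \<open>v < v'\<close> by linarith
    ultimately show ?thesis using window_value_low[OF \<sigma> i v1(1)] window_value_low[OF \<sigma> i v1(2) LL]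
      by linarith
  next
    case LC
    moreover have "(?a - 1) * k < window_value \<sigma> i v'" using LC by (simp add: window_value_def)
    ultimately show ?thesis using window_value_low[OF \<sigma> i v1(1) LC(1)] low_le[OF LC(1)] by linarith
  next
    case LU
    then show ?thesis using window_value_low[OF \<sigma> i v1(1) LU(1)] window_value_high[OF \<sigma> i LU(2) vM(2)]
        low_le[OF LU(1)] mid_lt by linarith
  next
    case CC
    then show ?thesis using \<open>v < v'\<close> rising by (simp add: window_value_def)
  next
    case CU
    then show ?thesis using window_value_mid[OF CU(1,2), of i \<sigma>] window_value_high[OF \<sigma> i CU(3) vM(2)] i
      by linarith
  next
    case UU
    have "(v - ?b) * k \<le> (v' - ?b - 1) * k" using \<open>v < v'\<close> UU by (intro mult_right_mono) auto
    moreover have "?b < v'" using UU \<open>v < v'\<close> by linarith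
    ultimately show ?thesis
      using window_value_high[OF \<sigma> i UU vM(1)] window_value_high[OF \<sigma> i _ vM(2)] by linarith
  qed
qed

lemma window_value_zone:
  assumes \<sigma>: "\<sigma> \<in> shuffles" and slot: "(i, v) \<in> slots"
  shows "(v < p ! 0 \<longleftrightarrow> window_value \<sigma> i v \<le> (p ! 0 - 1) * k) \<and>
    (p ! M < v \<longleftrightarrow> inner_top < window_value \<sigma> i v)"
proof -
  let ?a = "p ! 0" and ?b = "p ! M"
  have v: "1 \<le> v" "v \<le> Suc M" and i: "i < k \<and> v \<noteq> ?b \<or> i = k \<and> v = ?a"
    using slot first_last_bounds rising by (auto simp: slots_def)
  have mid_lt: "(?a - 1) * k < inner_top" by (simp add: inner_top_def)
  consider (L) "v < ?a" | (C) "?a \<le> v" "v \<le> ?b" | (U) "?b < v" by linarith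
  then show ?thesis
  proof cases
    case L
    then have ik: "i < k" using i rising by auto
    have "v * k \<le> (?a - 1) * k" using L by (intro mult_right_mono) auto
    then have "window_value \<sigma> i v \<le> (?a - 1) * k" "\<not> inner_top < window_value \<sigma> i v"
      using window_value_low[OF \<sigma> ik v(1) L] mid_lt by linarith+
    then show ?thesis
      using L rising by simp_all
  next
    case C
    then show ?thesis
      using window_value_mid[OF C, of i \<sigma>] i by auto
  next
    case U
    then have ik: "i < k" using i rising by auto
    have "\<not> window_value \<sigma> i v \<le> (?a - 1) * k" "inner_top < window_value \<sigma> i v"
      using window_value_high[OF \<sigma> ik U v(2)] mid_lt by linarith+
    then show ?thesis
      using U rising by simp_all
  qed
qed

lemma window_value_inj_on_slots:
  assumes \<sigma>: "\<sigma> \<in> shuffles"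
  shows "inj_on (\<lambda>(i, v). window_value \<sigma> i v) slots"
proof (rule inj_onI, clarify)
  let ?a = "p ! 0" and ?b = "p ! M"
  fix i v i' v' assume s: "(i, v) \<in> slots" "(i', v') \<in> slots"
    and eq: "window_value \<sigma> i v = window_value \<sigma> i' v'"
  have v: "1 \<le> v" "v \<le> Suc M" "1 \<le> v'" "v' \<le> Suc M"
    and i: "i < k \<and> v \<noteq> ?b \<or> i = k \<and> v = ?a" "i' < k \<and> v' \<noteq> ?b \<or> i' = k \<and> v' = ?a"
    using s first_last_bounds rising by (auto simp: slots_def)
  have same_zone: "v < ?a \<longleftrightarrow> v' < ?a" "?b < v \<longleftrightarrow> ?b < v'"
    using window_value_zone[OF \<sigma> s(1)] window_value_zone[OF \<sigma> s(2)] eq by simp_all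
  consider (L) "v < ?a" | (C) "?a \<le> v" "v \<le> ?b" | (U) "?b < v" by linarith
  then show "i = i' \<and> v = v'"
  proof cases
    case L
    then have ik: "i < k" "i' < k" and L': "v' < ?a" using i rising same_zone by auto
    have e: "v - 1 + 1 = v" "v' - 1 + 1 = v'" using v by simp_all
    have "(v - 1) * k < window_value \<sigma> i v" "window_value \<sigma> i v \<le> (v - 1 + 1) * k"
      "(v' - 1) * k < window_value \<sigma> i v" "window_value \<sigma> i v \<le> (v' - 1 + 1) * k"
      using window_value_low[OF \<sigma> ik(1) v(1) L] window_value_low[OF \<sigma> ik(2) v(3) L'] eq
      unfolding e by linarith+
    then have "v - 1 = v' - 1" by (rule mult_block_unique)
    then have "v = v'" using v by simp
    moreover have "inj (\<sigma> v)" using L v by (intro inj_shuffle[OF \<sigma>]) (simp add: outer_values_def)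
    ultimately show ?thesis using eq L by (simp add: window_value_def inj_eq)
  next
    case C
    then have C': "?a \<le> v'" "v' \<le> ?b" using same_zone by auto
    have lt: "v - ?a < ?b - ?a" "v' - ?a < ?b - ?a" using C C' i rising by auto
    have "i * (?b - ?a) + (v - ?a) = i' * (?b - ?a) + (v' - ?a)"
      using eq C C' by (simp add: window_value_def, linarith)
    then have "i = i' \<and> v - ?a = v' - ?a" by (rule mult_add_eq_mult_addD[OF lt])
    then show ?thesis using C C' by (intro conjI) linarith+
  next
    case U
    then have ik: "i < k" "i' < k" and U': "?b < v'" using i rising same_zone by auto
    have e: "v - ?b - 1 + 1 = v - ?b" "v' - ?b - 1 + 1 = v' - ?b" using U U' by linarith+
    have "(v - ?b - 1) * k < window_value \<sigma> i v - inner_top"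
      "window_value \<sigma> i v - inner_top \<le> (v - ?b - 1 + 1) * k"
      "(v' - ?b - 1) * k < window_value \<sigma> i v - inner_top"
      "window_value \<sigma> i v - inner_top \<le> (v' - ?b - 1 + 1) * k"
      using window_value_high[OF \<sigma> ik(1) U v(2)] window_value_high[OF \<sigma> ik(2) U' v(4)] eq
      unfolding e by linarith+
    then have "v - ?b - 1 = v' - ?b - 1" by (rule mult_block_unique)
    then have "v = v'" using U U' by simp
    moreover have "inj (\<sigma> v)" using U v by (intro inj_shuffle[OF \<sigma>]) (simp add: outer_values_def)
    ultimately show ?thesis using eq U rising by (simp add: window_value_def inj_eq)
  qed
qed

lemma window_value_range:
  assumes \<sigma>: "\<sigma> \<in> shuffles" and slot: "(i, v) \<in> slots"
  shows "window_value \<sigma> i v \<in> {1..1 + k * M}"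
proof -
  let ?a = "p ! 0" and ?b = "p ! M"
  have v: "1 \<le> v" "v \<le> Suc M" and i: "i < k \<and> v \<noteq> ?b \<or> i = k \<and> v = ?a"
    using slot first_last_bounds rising by (auto simp: slots_def)
  have top: "inner_top \<le> 1 + k * M" using inner_top_add by linarith
  consider (L) "v < ?a" | (C) "?a \<le> v" "v \<le> ?b" | (U) "?b < v" by linarith
  then show ?thesis
  proof cases
    case L
    then have ik: "i < k" using i rising by auto
    have "v * k \<le> (?a - 1) * k" using L by (intro mult_right_mono) auto
    moreover have "(?a - 1) * k < inner_top" by (simp add: inner_top_def)
    ultimately have "1 \<le> window_value \<sigma> i v" "window_value \<sigma> i v \<le> 1 + k * M"
      using window_value_low[OF \<sigma> ik v(1) L] top by linarith+
    then show ?thesis by simp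
  next
    case C
    moreover have "i < k \<or> i = k \<and> v = ?a" using i by auto
    ultimately have "(?a - 1) * k < window_value \<sigma> i v" "window_value \<sigma> i v \<le> inner_top"
      by (rule window_value_mid)+
    then show ?thesis using top by simp
  next
    case U
    then have ik: "i < k" using i rising by auto
    have "(v - ?b) * k \<le> (Suc M - ?b) * k" using v by (intro mult_right_mono) auto
    then have "1 \<le> window_value \<sigma> i v" "window_value \<sigma> i v \<le> 1 + k * M"
      using window_value_high[OF \<sigma> ik U v(2)] inner_top_add by linarith+
    then show ?thesis by simp
  qed
qed

lemma position_slot:
  assumes "q < 1 + k * M"
  shows "(q div M, p ! (q mod M)) \<in> slots"
proof (cases "q div M < k")
  case True
  have "q mod M < M" using M_pos by simp
  then show ?thesis using True nth_p_range[of "q mod M"] distinct_p length_p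
    by (auto simp: slots_def nth_eq_iff_index_eq)
next
  case False
  then show ?thesis using eq_last_if_not_div_less[OF assms] M_pos by (simp add: slots_def)
qed

lemma inj_on_position_slot: "inj_on (\<lambda>q. (q div M, p ! (q mod M))) {..<1 + k * M}"
proof (rule inj_onI)
  fix q q' assume "(q div M, p ! (q mod M)) = (q' div M, p ! (q' mod M))"
  moreover have "q mod M < Suc M" "q' mod M < Suc M" using M_pos by (simp_all add: less_SucI)
  ultimately have "q div M = q' div M" "q mod M = q' mod M"
    using distinct_p length_p by (simp_all add: nth_eq_iff_index_eq)
  then show "q = q'" by (metis div_mult_mod_eq)
qed

lemma window_value_position:
  assumes "j \<le> M"
  shows "window_value \<sigma> ((i * M + j) div M) (p ! ((i * M + j) mod M)) = window_value \<sigma> i (p ! j)"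
proof (cases "j = M")
  case True
  then have "(i * M + j) div M = Suc i" "(i * M + j) mod M = 0" using M_pos by simp_all
  then show ?thesis using True rising by (simp add: window_value_def)
qed (use assms in simp)

lemma is_perm_shuffle_perm:
  assumes \<sigma>: "\<sigma> \<in> shuffles"
  shows "is_perm (1 + k * M) (shuffle_perm \<sigma>)"
proof -
  let ?n = "1 + k * M" and ?s = "shuffle_perm \<sigma>"
  have "inj_on ((\<lambda>(i, v). window_value \<sigma> i v) \<circ> (\<lambda>q. (q div M, p ! (q mod M)))) {..<?n}"
    using inj_on_position_slot window_value_inj_on_slots[OF \<sigma>] position_slot
    by (intro comp_inj_on) (auto intro: inj_on_subset)
  then have "inj_on (\<lambda>q. window_value \<sigma> (q div M) (p ! (q mod M))) {..<?n}" by (simp add: comp_def)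
  then have "distinct ?s" by (simp add: shuffle_perm_def distinct_map atLeast0LessThan del: upt_Suc)
  moreover have "set ?s \<subseteq> {1..?n}"
    using window_value_range[OF \<sigma> position_slot] by (auto simp: shuffle_perm_def simp del: upt_Suc)
  moreover have "length ?s = ?n" by (simp add: shuffle_perm_def)
  ultimately show ?thesis using is_perm_if_distinct_subset[of ?s] by simp
qed

lemma st_shuffle_perm_window:
  assumes \<sigma>: "\<sigma> \<in> shuffles" and i: "i < k"
  shows "st (take (Suc M) (drop (i * M) (shuffle_perm \<sigma>))) = p"
proof (rule st_eq_if_order_embedding)
  let ?w = "take (Suc M) (drop (i * M) (shuffle_perm \<sigma>))"
  have iM: "i * M + j < 1 + k * M" if "j < Suc M" for j
    using that i mult_right_mono[of "i + 1" k M] by (simp add: algebra_simps)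
  have "Suc M \<le> 1 + k * M - i * M" using iM[of M] by simp
  then have lw: "length ?w = Suc M" by (simp add: shuffle_perm_def)
  have wn: "?w ! j = window_value \<sigma> i (p ! j)" if j: "j < Suc M" for j
    using iM[OF j] window_value_position[of j \<sigma> i] j
    by (simp add: shuffle_perm_def nth_take nth_drop del: upt_Suc)
  show "length ?w = length p" using lw length_p by simp
  show "is_perm (length p) p" using perm length_p by simp
  fix j j' assume "j < length p" "j' < length p" and "p ! j < p ! j'"
  then show "?w ! j < ?w ! j'"
    using wn window_value_strict_mono[OF \<sigma> i nth_p_range nth_p_range] length_p by simp
qed

lemma shuffle_perm_mem_chain_perms: "\<sigma> \<in> shuffles \<Longrightarrow> shuffle_perm \<sigma> \<in> chain_perms p k"
  using is_perm_shuffle_perm st_shuffle_perm_window length_p by (simp add: chain_perms_def)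

lemma inj_on_shuffle_perm: "inj_on shuffle_perm shuffles"
proof (rule inj_onI, rule ext, rule ext)
  fix \<sigma> \<sigma>' v i assume \<sigma>: "\<sigma> \<in> shuffles" and \<sigma>': "\<sigma>' \<in> shuffles"
    and eq: "shuffle_perm \<sigma> = shuffle_perm \<sigma>'"
  show "\<sigma> v i = \<sigma>' v i"
  proof (cases "v \<in> outer_values \<and> i < k")
    case True
    then have "v \<in> set p" using set_p by (simp add: outer_values_def)
    then obtain j where j: "j < Suc M" "p ! j = v" using length_p by (auto simp: in_set_conv_nth)
    have q: "i * M + j < 1 + k * M" using True j mult_right_mono[of "i + 1" k M] by (simp add: algebra_simps)
    have "window_value \<sigma> i v = window_value \<sigma>' i v"
      using arg_cong[OF eq, of "\<lambda>s. s ! (i * M + j)"] q j window_value_position[of j _ i]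
      by (simp add: shuffle_perm_def del: upt_Suc)
    then show ?thesis using True rising by (auto simp: window_value_def outer_values_def)
  next
    case False
    show ?thesis
    proof (cases "v \<in> outer_values")
      case True
      then have "\<sigma> v permutes {..<k}" "\<sigma>' v permutes {..<k}" "i \<notin> {..<k}"
        using \<sigma> \<sigma>' False by (auto simp: shuffles_def)
      then show ?thesis by (simp add: permutes_not_in)
    qed (use \<sigma> \<sigma>' in \<open>auto simp: shuffles_def PiE_def extensional_def\<close>)
  qed
qed

lemma card_chain_perms_ge: "fact k ^ outer_count p \<le> card (chain_perms p k)"
proof -
  have "card {f. f permutes {..<k}} = fact k" by (rule card_permutations) simp_all
  then have "fact k ^ outer_count p = card shuffles"
    by (simp add: shuffles_def card_PiE card_outer_values[symmetric] outer_values_def)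
  also have "\<dots> = card (shuffle_perm ` shuffles)"
    using inj_on_shuffle_perm by (simp add: card_image)
  also have "\<dots> \<le> card (chain_perms p k)"
    using shuffle_perm_mem_chain_perms by (intro card_mono) auto
  finally show ?thesis .
qed

end

section \<open>Comparison of the cluster numbers\<close>

lemma power_divide_fact_le_exp:
  fixes x :: real
  assumes "0 \<le> x"
  shows "x ^ n / fact n \<le> exp x"
proof -
  have sums: "(\<lambda>i. x ^ i / fact i) sums exp x"
    using exp_converges[of x] by (simp add: divide_inverse_commute scaleR_conv_of_real)
  have "x ^ n / fact n = (\<Sum>i\<in>{n}. x ^ i / fact i)" by simp
  also have "\<dots> \<le> exp x"
    using sum_le_suminf[OF sums_summable[OF sums], of "{n}"] sums_unique[OF sums] assms by simp
  finally show ?thesis .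
qed

lemma power_le_exp_mult_fact: "real k ^ k \<le> exp (real k) * fact k"
  using power_divide_fact_le_exp[of "real k" k] by (simp add: field_simps)

lemma eventually_power_less_fact_power:
  fixes M E :: nat
  shows "\<exists>K. \<forall>k\<ge>K. (1 + k * M) ^ (k * E) < fact k ^ (E + 1)"
proof (intro exI allI impI)
  fix k :: nat
  assume kK: "k \<ge> 3 ^ (E + 1) * (M + 1) ^ E + 1"
  have k1: "k \<ge> 1" using kK by simp
  have "exp (1::real) ^ (E + 1) * real (M + 1) ^ E \<le> 3 ^ (E + 1) * real (M + 1) ^ E"
    using exp_le by (intro mult_right_mono power_mono) auto
  also have "\<dots> < real k"
  proof -
    have "3 ^ (E + 1) * (M + 1) ^ E < k" using kK by simp
    then have "real (3 ^ (E + 1) * (M + 1) ^ E) < real k" by (simp only: of_nat_less_iff)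
    then show ?thesis by simp
  qed
  finally have big: "exp 1 ^ (E + 1) * real (M + 1) ^ E < real k" .
  have base: "(real k * real (M + 1)) ^ E < (real k / exp 1) ^ (E + 1)"
  proof -
    have "(real k * real (M + 1)) ^ E * exp 1 ^ (E + 1)
          = real k ^ E * (exp 1 ^ (E + 1) * real (M + 1) ^ E)"
      by (simp only: power_mult_distrib mult.assoc mult.commute[of "real (M + 1) ^ E"])
    also have "\<dots> < real k ^ E * real k" using big k1 by (intro mult_strict_left_mono) auto
    finally show ?thesis by (simp add: power_divide field_simps)
  qed
  have "real (1 + k * M) \<le> real k * real (M + 1)" using k1 by (simp add: algebra_simps)
  then have "real ((1 + k * M) ^ (k * E)) \<le> (real k * real (M + 1)) ^ (k * E)"
    by (simp add: power_mono)
  also have "\<dots> = ((real k * real (M + 1)) ^ E) ^ k" by (simp add: power_mult[symmetric] mult.commute)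
  also have "\<dots> < ((real k / exp 1) ^ (E + 1)) ^ k"
    using base k1 by (intro power_strict_mono) auto
  also have "\<dots> = ((real k / exp 1) ^ k) ^ (E + 1)"
    unfolding power_mult[symmetric] by (simp only: mult.commute)
  also have "(real k / exp 1) ^ k = real k ^ k / exp (real k)"
    by (simp add: power_divide exp_of_nat_mult[symmetric])
  also have "(real k ^ k / exp (real k)) ^ (E + 1) \<le> fact k ^ (E + 1)"
    using power_le_exp_mult_fact[of k] by (intro power_mono) (auto simp: divide_le_eq mult.commute)
  finally show "(1 + k * M) ^ (k * E) < fact k ^ (E + 1)"
    by (metis of_nat_fact of_nat_less_iff of_nat_power)
qed

lemma eventually_cluster_num_less:
  assumes p: "chain_pattern p M" and t: "chain_pattern t M" and less: "outer_count p < outer_count t"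
  shows "\<exists>K. \<forall>k\<ge>K. cluster_num p (1 + k * M) k < cluster_num t (1 + k * M) k"
proof -
  obtain K where K: "\<And>k. k \<ge> K \<Longrightarrow> (1 + k * M) ^ (k * outer_count p) < fact k ^ (outer_count p + 1)"
    using eventually_power_less_fact_power by blast
  have "cluster_num p (1 + k * M) k < cluster_num t (1 + k * M) k" if k: "k \<ge> max K 1" for k
  proof -
    have "cluster_num p (1 + k * M) k \<le> (1 + k * M) ^ (k * outer_count p)"
      using cluster_num_eq_card_chain_perms chain_pattern.card_chain_perms_le[OF p] k
        chain_pattern.length_p[OF p] chain_pattern.M_pos[OF p] by simp
    also have "\<dots> < fact k ^ (outer_count p + 1)" using K k by simp
    also have "\<dots> \<le> fact k ^ outer_count t" using less by (intro power_increasing) auto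
    also have "\<dots> \<le> cluster_num t (1 + k * M) k"
      using cluster_num_eq_card_chain_perms chain_pattern.card_chain_perms_ge[OF t] k
        chain_pattern.length_p[OF t] chain_pattern.M_pos[OF t] by simp
    finally show ?thesis .
  qed
  then show ?thesis by blast
qed

theorem theorem4p1:
  fixes p t :: "nat list" and m :: nat
  assumes "is_perm m p" and "is_perm m t"
    and "standard_form p" and "standard_form t"
    and "int (p ! (m - 1)) - int (p ! 0) > int (t ! (m - 1)) - int (t ! 0)"
  shows "(\<exists>K::nat. \<forall>k\<ge>K.
            cluster_num p (1 + k * (m - 1)) k < cluster_num t (1 + k * (m - 1)) k)
         \<and> \<not> strongly_cwilf_equiv p t"
proof -
  have len: "length p = m" "length t = m" using assms(1,2) by (simp_all add: is_perm_def)
  then have rising: "p ! 0 < p ! (m - 1)" "t ! 0 < t ! (m - 1)"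
    using assms(3,4) by (simp_all add: standard_form_def)
  then obtain M where m: "m = Suc M" by (cases m) auto
  with rising have M_pos: "1 \<le> M" by (cases M) auto
  then have pattern: "chain_pattern p M" "chain_pattern t M"
    using assms(1,2) rising by (simp_all add: chain_pattern_def m)
  have "outer_count p < outer_count t"
    using assms(5) chain_pattern.first_last_bounds[OF pattern(1)] chain_pattern.first_last_bounds[OF pattern(2)]
      chain_pattern.outer_count_p[OF pattern(1)] chain_pattern.outer_count_p[OF pattern(2)] m
    by simp
  then obtain K where K: "\<forall>k\<ge>K. cluster_num p (1 + k * M) k < cluster_num t (1 + k * M) k"
    using eventually_cluster_num_less[OF pattern] by blast
  moreover have "\<not> strongly_cwilf_equiv p t"
    using K cluster_num_eq_if_strongly_cwilf_equiv[of p t "1 + K * M" K] len m M_pos by auto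
  ultimately show ?thesis using m by auto
qed

end
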